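(* Let $k$ be a field of characteristic $p>2$ ($p$ prime). The $T$-space $W^{S_0}$ of $k_0\langle X\rangle$ is not finitely based.
   Context: $X=\{x_i\mid i\ge0\}$ countably infinite; $k_0\langle X\rangle$ the free nonunitary associative $k$-algebra on $X$; $[a,b]=ab-ba$. A $T$-space is a subspace invariant under all endomorphisms of $k_0\langle X\rangle$; $H^{S_0}$ is the smallest $T$-space containing $H$; a $T$-space is finitely based if it equals $H^{S_0}$ for finite $H$. $\kappa(u,v)=[u,v]u^{p-1}v^{p-1}$, $w_m=\prod_{r=1}^m\kappa(x_{2r-1},x_{2r})$, $w_m(u_1,\ldots,u_{2m})$ the image under $x_j\mapsto u_j$. For $m\ge1$, $I_m$ is the set of strictly increasing functions $\{1,\ldots,2m\}\to\mathbb{Z}^+$, $W_m=\{w_j(x_{f(1)},\ldots,x_{f(2j)})\mid 1\le j\le m,\ f\in I_j\}$, $W=\bigcup_{m\ge1}W_m$. *)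

theory Defs
  imports "HOL-Computational_Algebra.Primes"
begin

text \<open>Noncommutative polynomials in variables x_0, x_1, ... over 'k, represented as
  coefficient functions on words (lists of variable indices).
  The free nonunitary algebra k_0<X> is the set of finitely supported such
  functions with zero coefficient on the empty word.\<close>

type_synonym 'k ncpoly = "nat list \<Rightarrow> 'k"

definition ncP :: "('k::field) ncpoly set" where
  "ncP = {f. finite {w. f w \<noteq> 0} \<and> f [] = 0}"

definition nc_add :: "('k::field) ncpoly \<Rightarrow> 'k ncpoly \<Rightarrow> 'k ncpoly" where
  "nc_add f g = (\<lambda>w. f w + g w)"

definition nc_smult :: "'k::field \<Rightarrow> 'k ncpoly \<Rightarrow> 'k ncpoly" where
  "nc_smult c f = (\<lambda>w. c * f w)"

definition nc_zero :: "('k::field) ncpoly" where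
  "nc_zero = (\<lambda>w. 0)"

text \<open>Unit (empty word); used only internally for evaluating monomials.\<close>
definition nc_one :: "('k::field) ncpoly" where
  "nc_one = (\<lambda>w. if w = [] then 1 else 0)"

definition nc_mul :: "('k::field) ncpoly \<Rightarrow> 'k ncpoly \<Rightarrow> 'k ncpoly" where
  "nc_mul f g = (\<lambda>w. \<Sum>i\<le>length w. f (take i w) * g (drop i w))"

definition nc_var :: "nat \<Rightarrow> ('k::field) ncpoly" where
  "nc_var i = (\<lambda>w. if w = [i] then 1 else 0)"

definition nc_comm :: "('k::field) ncpoly \<Rightarrow> 'k ncpoly \<Rightarrow> 'k ncpoly" where
  "nc_comm a b = nc_add (nc_mul a b) (nc_smult (-1) (nc_mul b a))"

primrec nc_pow :: "('k::field) ncpoly \<Rightarrow> nat \<Rightarrow> 'k ncpoly" where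
  "nc_pow u 0 = nc_one"
| "nc_pow u (Suc n) = nc_mul u (nc_pow u n)"

definition word_subst :: "(nat \<Rightarrow> ('k::field) ncpoly) \<Rightarrow> nat list \<Rightarrow> 'k ncpoly" where
  "word_subst s w = foldr (\<lambda>i acc. nc_mul (s i) acc) w nc_one"

definition nc_subst :: "(nat \<Rightarrow> ('k::field) ncpoly) \<Rightarrow> 'k ncpoly \<Rightarrow> 'k ncpoly" where
  "nc_subst s f = (\<lambda>u. \<Sum>w\<in>{w. f w \<noteq> 0}. f w * word_subst s w u)"

definition is_Tspace :: "('k::field) ncpoly set \<Rightarrow> bool" where
  "is_Tspace V \<longleftrightarrow> V \<subseteq> ncP \<and> nc_zero \<in> V
     \<and> (\<forall>f\<in>V. \<forall>g\<in>V. nc_add f g \<in> V)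
     \<and> (\<forall>c. \<forall>f\<in>V. nc_smult c f \<in> V)
     \<and> (\<forall>s. (\<forall>i. s i \<in> ncP) \<longrightarrow> (\<forall>f\<in>V. nc_subst s f \<in> V))"

text \<open>H^{S_0}: smallest T-space containing H.\<close>
definition Tclosure :: "('k::field) ncpoly set \<Rightarrow> 'k ncpoly set" where
  "Tclosure H = \<Inter>{V. is_Tspace V \<and> H \<subseteq> V}"

definition finitely_based :: "('k::field) ncpoly set \<Rightarrow> bool" where
  "finitely_based V \<longleftrightarrow> (\<exists>H. finite H \<and> H \<subseteq> ncP \<and> V = Tclosure H)"

definition kappa :: "nat \<Rightarrow> ('k::field) ncpoly \<Rightarrow> 'k ncpoly \<Rightarrow> 'k ncpoly" where
  "kappa p u v = nc_mul (nc_comm u v) (nc_mul (nc_pow u (p - 1)) (nc_pow v (p - 1)))"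

text \<open>w_m(u_1,...,u_{2m}) = kappa(u_1,u_2) kappa(u_3,u_4) ... kappa(u_{2m-1},u_{2m}), m \<ge> 1.\<close>
definition w_poly :: "nat \<Rightarrow> nat \<Rightarrow> (nat \<Rightarrow> ('k::field) ncpoly) \<Rightarrow> 'k ncpoly" where
  "w_poly p m u = foldr (\<lambda>r acc. nc_mul (kappa p (u (2*r - 1)) (u (2*r))) acc)
                        (butlast [1..<m+1]) (kappa p (u (2*m - 1)) (u (2*m)))"

definition W_set :: "nat \<Rightarrow> ('k::field) ncpoly set" where
  "W_set p = {w_poly p j (\<lambda>i. nc_var (f i)) | j f.
      j \<ge> 1 \<and> strict_mono_on {1..2*j} f \<and> (\<forall>i\<in>{1..2*j}. f i \<ge> 1)}"

end

theory Submission
  imports Defs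
begin

text \<open>
  Evaluate the polynomials at elements \<open>Q + d Q\<close> of an operator algebra realising the
  de Rham complex of \<open>k[t\<^sub>1, t\<^sub>2, \<dots>]\<close>, where \<open>Q\<close> runs over the even part of the
  supercommutative algebra generated by the \<open>t\<^sub>i\<close> and the \<open>dt\<^sub>i\<close>. Since \<open>Q \<mapsto> Q + d Q\<close> is
  multiplicative, such elements form a subalgebra, so for every linear functional \<open>\<lambda>\<close> the
  polynomials all of whose evaluations are killed by \<open>\<lambda>\<close> form a T-space.

  One computes \<open>\<kappa>(Q + d Q, R + d R) = 2 \<beta>(Q) \<beta>(R)\<close> with the closed form
  \<open>\<beta>(Q) = Q\<^sup>p\<^sup>-\<^sup>1 d Q\<close>; modulo exact forms \<open>\<beta>(Q)\<close> only depends on the polynomial part of \<open>Q\<close>,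
  so it is a closed 1-form up to an exact one. Hence a product of \<open>j\<close> values of \<open>\<kappa>\<close> is a closed \<open>2j\<close>-form plus
  an exact form. The functional \<open>\<lambda>\<^sub>n\<close> reading off the coefficient of
  \<open>t\<^sub>1\<^sup>p\<^sup>-\<^sup>1 \<cdots> t\<^sub>n\<^sup>p\<^sup>-\<^sup>1 dt\<^sub>1 \<cdots> dt\<^sub>n\<close> kills exact forms because \<open>p = 0\<close> in \<open>k\<close>, and kills
  \<open>2j\<close>-forms unless \<open>n = 2j\<close>. So the polynomials killed by all \<open>\<lambda>\<^sub>n\<close> with \<open>n > 2m\<close> form an
  ascending chain of T-spaces \<open>V\<^sub>m\<close> whose union contains \<open>W\<close>, while
  \<open>\<lambda>\<^sub>2\<^sub>m\<^sub>+\<^sub>2(w\<^sub>m\<^sub>+\<^sub>1(t\<^sub>1 + dt\<^sub>1, \<dots>)) = 2\<^sup>m\<^sup>+\<^sup>1 \<noteq> 0\<close> shows \<open>w\<^sub>m\<^sub>+\<^sub>1 \<notin> V\<^sub>m\<close>. A finitely based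
  T-space would be contained in a single \<open>V\<^sub>m\<close>.
\<close>

section \<open>Linear operators on formal series\<close>

text \<open>
  A vector \<open>v\<close> stands for the formal series \<open>\<Sum> v(a, B) t\<^sup>a e\<^sub>B\<close> in commuting \<open>t\<^sub>i\<close> and
  anticommuting \<open>e\<^sub>i = dt\<^sub>i\<close>, where \<open>e\<^sub>B\<close> is the increasing product over the finite set \<open>B\<close>
  (coordinates at infinite \<open>B\<close> play no role).
\<close>

type_synonym 'k vec = "((nat \<Rightarrow> nat) \<times> nat set) \<Rightarrow> 'k"

definition vec_linear :: "('k::field vec \<Rightarrow> 'k vec) \<Rightarrow> bool" where
  "vec_linear f \<longleftrightarrow> (\<forall>v w. f (\<lambda>x. v x + w x) = (\<lambda>x. f v x + f w x))
                   \<and> (\<forall>c v. f (\<lambda>x. c * v x) = (\<lambda>x. c * f v x))"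

typedef (overloaded) 'k endo = "{f :: 'k::field vec \<Rightarrow> 'k vec. vec_linear f}"
  by (rule exI[of _ "\<lambda>v. v"]) (simp add: vec_linear_def)

setup_lifting type_definition_endo

lemma vec_linear_add: "vec_linear f \<Longrightarrow> f (\<lambda>x. v x + w x) = (\<lambda>x. f v x + f w x)"
  by (simp add: vec_linear_def)

lemma vec_linear_scale: "vec_linear f \<Longrightarrow> f (\<lambda>x. c * v x) = (\<lambda>x. c * f v x)"
  by (simp add: vec_linear_def)

lemma vec_linear_Rep_endo: "vec_linear (Rep_endo X)"
  using Rep_endo by simp

instantiation endo :: (field) ring_1
begin

lift_definition zero_endo :: "'a endo" is "\<lambda>v x. 0" by (simp add: vec_linear_def)
lift_definition one_endo :: "'a endo" is "\<lambda>v. v" by (simp add: vec_linear_def)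
lift_definition plus_endo :: "'a endo \<Rightarrow> 'a endo \<Rightarrow> 'a endo" is "\<lambda>f g v x. f v x + g v x"
  by (simp add: vec_linear_def algebra_simps)
lift_definition uminus_endo :: "'a endo \<Rightarrow> 'a endo" is "\<lambda>f v x. - f v x"
  by (simp add: vec_linear_def algebra_simps)
lift_definition minus_endo :: "'a endo \<Rightarrow> 'a endo \<Rightarrow> 'a endo" is "\<lambda>f g v x. f v x - g v x"
  by (simp add: vec_linear_def algebra_simps)
lift_definition times_endo :: "'a endo \<Rightarrow> 'a endo \<Rightarrow> 'a endo" is "\<lambda>f g v. f (g v)"
  by (simp add: vec_linear_def)

instance
proof
  fix a b c :: "'a endo"
  show "a * b * c = a * (b * c)" by transfer simp
  show "1 * a = a" by transfer simp
  show "a * 1 = a" by transfer simp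
  show "a + b + c = a + (b + c)" by transfer (simp add: algebra_simps)
  show "a + b = b + a" by transfer (simp add: algebra_simps)
  show "0 + a = a" by transfer simp
  show "- a + a = 0" by transfer simp
  show "a - b = a + - b" by transfer simp
  show "(a + b) * c = a * c + b * c" by transfer simp
  show "a * (b + c) = a * b + a * c" by transfer (simp add: vec_linear_add)
  show "(0::'a endo) \<noteq> 1"
  proof transfer
    show "(\<lambda>v x. 0::'a) \<noteq> (\<lambda>v. v)"
      by (metis zero_neq_one)
  qed
qed

end

lemma endo_eqI: "(\<And>v a B. Rep_endo X v (a, B) = Rep_endo Y v (a, B)) \<Longrightarrow> X = Y"
  by (metis Rep_endo_inject ext surj_pair)

lemma Rep_endo_plus: "Rep_endo (X + Y) v x = Rep_endo X v x + Rep_endo Y v x" by transfer simp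
lemma Rep_endo_minus: "Rep_endo (X - Y) v x = Rep_endo X v x - Rep_endo Y v x" by transfer simp
lemma Rep_endo_uminus: "Rep_endo (- X) v x = - Rep_endo X v x" by transfer simp
lemma Rep_endo_times: "Rep_endo (X * Y) v = Rep_endo X (Rep_endo Y v)" by transfer simp
lemma Rep_endo_zero: "Rep_endo 0 v x = 0" by transfer simp
lemma Rep_endo_one: "Rep_endo 1 v = v" by transfer simp

lemma Rep_endo_zero_vec: "Rep_endo X (\<lambda>x. 0) = (\<lambda>x. 0)"
  using vec_linear_scale[OF vec_linear_Rep_endo, of X 0 "\<lambda>x. 0"] by simp

lift_definition scal :: "'k::field \<Rightarrow> 'k endo" is "\<lambda>c v x. c * v x"
  by (simp add: vec_linear_def algebra_simps)

lemma Rep_scal: "Rep_endo (scal c) v = (\<lambda>x. c * v x)"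
  by transfer simp

lemma scal_commute: "scal c * X = X * scal c"
  by (rule endo_eqI) (simp add: Rep_endo_times Rep_scal vec_linear_scale[OF vec_linear_Rep_endo])

lemma scal_mult: "scal a * scal b = scal (a * b)"
  by (rule endo_eqI) (simp add: Rep_endo_times Rep_scal)

lemma scal_add: "scal a + scal b = scal (a + b)"
  by (rule endo_eqI) (simp add: Rep_endo_plus Rep_scal algebra_simps)

lemma scal_one: "scal 1 = 1"
  by (rule endo_eqI) (simp add: Rep_endo_one Rep_scal)

lemma scal_zero: "scal 0 = 0"
  by (rule endo_eqI) (simp add: Rep_endo_zero Rep_scal)

lemma scal_minus: "scal (- a) = - scal a"
  by (rule endo_eqI) (simp add: Rep_endo_uminus Rep_scal)

lemma scal_sum: "scal (\<Sum>x\<in>A. f x) = (\<Sum>x\<in>A. scal (f x))"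
  by (induction A rule: infinite_finite_induct) (simp_all add: scal_zero scal_add[symmetric])

lemma of_nat_endo: "(of_nat n :: 'k::field endo) = scal (of_nat n)"
  by (induction n) (simp_all add: scal_zero scal_one flip: scal_add add.commute)

lemma endo_double_eq_0:
  assumes two: "(2::'k::field) \<noteq> 0" and "Y + Y = (0::'k endo)"
  shows "Y = 0"
proof -
  have "scal 2 * Y = Y + Y"
    by (metis one_add_one scal_add scal_one mult_2 distrib_right mult_1_left)
  then have "scal (1/2) * (scal 2 * Y) = 0"
    using assms(2) by simp
  then show ?thesis
    using two by (simp add: mult.assoc[symmetric] scal_mult scal_one)
qed

section \<open>Multiplication operators, \<open>D\<close> and the parity\<close>

text \<open>
  \<open>T i\<close> and \<open>E i\<close> are left multiplication by \<open>t\<^sub>i\<close> and \<open>e\<^sub>i\<close> (\<open>sgn_below i B\<close> is the sign of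
  moving \<open>e\<^sub>i\<close> into place in \<open>e\<^sub>B\<close>), \<open>D = \<Sum> e\<^sub>i \<partial>/\<partial>t\<^sub>i\<close> is the de Rham differential and
  \<open>Par\<close> is the parity involution.
\<close>

definition sgn_below :: "nat \<Rightarrow> nat set \<Rightarrow> 'k::field" where
  "sgn_below i B = (-1) ^ card {c \<in> B. c < i}"

lift_definition T :: "nat \<Rightarrow> 'k::field endo" is
  "\<lambda>i v (a, B). if 0 < a i then v (a(i := a i - 1), B) else 0"
  by (auto simp add: vec_linear_def fun_eq_iff)

lift_definition E :: "nat \<Rightarrow> 'k::field endo" is
  "\<lambda>i v (a, B). if finite B \<and> i \<in> B then sgn_below i (B - {i}) * v (a, B - {i}) else 0"
  by (auto simp add: vec_linear_def fun_eq_iff algebra_simps)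

lift_definition D :: "'k::field endo" is
  "\<lambda>v (a, B). \<Sum>i\<in>B. sgn_below i (B - {i}) * of_nat (a i + 1) * v (a(i := a i + 1), B - {i})"
  by (auto simp add: vec_linear_def fun_eq_iff algebra_simps sum.distrib sum_distrib_left)

lift_definition Par :: "'k::field endo" is "\<lambda>v (a, B). (-1) ^ card B * v (a, B)"
  by (auto simp add: vec_linear_def fun_eq_iff algebra_simps)

lemma Rep_T: "Rep_endo (T i) v (a, B) = (if 0 < a i then v (a(i := a i - 1), B) else 0)"
  by transfer simp

lemma Rep_E:
  "Rep_endo (E i) v (a, B) = (if finite B \<and> i \<in> B then sgn_below i (B - {i}) * v (a, B - {i}) else 0)"
  by transfer simp

lemma Rep_D:
  "Rep_endo D v (a, B) = (\<Sum>i\<in>B. sgn_below i (B - {i}) * of_nat (a i + 1) * v (a(i := a i + 1), B - {i}))"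
  by transfer simp

lemma Rep_Par: "Rep_endo Par v (a, B) = (-1) ^ card B * v (a, B)"
  by transfer simp

lemma Par_Par: "Par * Par = (1::'k::field endo)"
  by (rule endo_eqI) (simp add: Rep_endo_times Rep_Par Rep_endo_one flip: power_add mult.assoc)

lemma Par_T: "Par * T i = T i * (Par::'k::field endo)"
  by (rule endo_eqI) (simp add: Rep_endo_times Rep_Par Rep_T)

lemma minus_one_power_card_Diff1: "finite B \<Longrightarrow> i \<in> B \<Longrightarrow> ((-1::'k::field) ^ card B) = - ((-1) ^ card (B - {i}))"
proof -
  assume "finite B" "i \<in> B"
  hence "card B = Suc (card (B - {i}))"
    by (metis card_Suc_Diff1)
  thus ?thesis by simp
qed

lemma Par_E: "Par * E i = - (E i * (Par::'k::field endo))"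
  by (rule endo_eqI) (auto simp add: Rep_endo_times Rep_Par Rep_E Rep_endo_uminus minus_one_power_card_Diff1)

lemma Par_D: "Par * D = - (D * (Par::'k::field endo))"
proof (rule endo_eqI)
  fix v a B
  show "Rep_endo (Par * D) v (a, B) = Rep_endo (- (D * (Par::'k endo))) v (a, B)"
  proof (cases "finite B")
    case True
    thus ?thesis
      by (simp add: Rep_endo_times Rep_Par Rep_D Rep_endo_uminus sum_distrib_left minus_one_power_card_Diff1
            mult_ac flip: sum_negf cong: sum.cong)
  next
    case False
    thus ?thesis by (simp add: Rep_endo_times Rep_Par Rep_D Rep_endo_uminus)
  qed
qed

lemma sgn_below_insert: "finite C \<Longrightarrow> j \<notin> C \<Longrightarrow>
   sgn_below i (insert j C) = (if j < i then -1 else 1) * (sgn_below i C :: 'k::field)"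
proof -
  assume f: "finite C" and j: "j \<notin> C"
  show ?thesis
  proof (cases "j < i")
    case True
    hence "{c \<in> insert j C. c < i} = insert j {c \<in> C. c < i}" by auto
    moreover have "j \<notin> {c \<in> C. c < i}" using j by auto
    ultimately have "card {c \<in> insert j C. c < i} = Suc (card {c \<in> C. c < i})"
      using f by simp
    thus ?thesis using True by (simp add: sgn_below_def)
  next
    case False
    hence "{c \<in> insert j C. c < i} = {c \<in> C. c < i}" by auto
    thus ?thesis using False by (simp add: sgn_below_def)
  qed
qed

lemma sgn_below_swap:
  assumes "finite B" "i \<in> B" "j \<in> B" "i \<noteq> j"
  shows "sgn_below i (B - {i}) * sgn_below j (B - {i} - {j}) = - (sgn_below j (B - {j}) * (sgn_below i (B - {j} - {i}) :: 'k::field))"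
proof -
  let ?C = "B - {i} - {j}"
  have C: "finite ?C" using assms by simp
  have e1: "B - {i} = insert j ?C" using assms by auto
  have e2: "B - {j} = insert i ?C" using assms by auto
  have e3: "B - {j} - {i} = ?C" by auto
  have "sgn_below i (insert j ?C) = (if j < i then -1 else 1) * (sgn_below i ?C :: 'k)"
    using C by (rule sgn_below_insert) simp
  note s1 = this[folded e1]
  have "sgn_below j (insert i ?C) = (if i < j then -1 else 1) * (sgn_below j ?C :: 'k)"
    using C by (rule sgn_below_insert) simp
  note s2 = this[folded e2]
  show ?thesis
    unfolding e3 s1 s2 using assms(4) by (cases "i < j") auto
qed

lemma E_E: "E i * E j = - (E j * (E i::'k::field endo))"
proof (rule endo_eqI)
  fix v a B
  show "Rep_endo (E i * E j) v (a, B) = Rep_endo (- (E j * (E i :: 'k endo))) v (a, B)"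
  proof (cases "finite B \<and> i \<in> B \<and> j \<in> B \<and> i \<noteq> j")
    case True
    hence "B - {i} - {j} = B - {j} - {i}" by auto
    moreover have h: "sgn_below i (B - {i}) * sgn_below j (B - {i} - {j}) = - (sgn_below j (B - {j}) * (sgn_below i (B - {j} - {i}) :: 'k))"
      using True sgn_below_swap[of B i j] by simp
    ultimately show ?thesis using True
      by (simp add: Rep_endo_times Rep_E Rep_endo_uminus mult.assoc[symmetric])
  next
    case False
    thus ?thesis by (auto simp add: Rep_endo_times Rep_E Rep_endo_uminus)
  qed
qed

lemma T_T: "T i * T j = T j * (T i::'k::field endo)"
proof (rule endo_eqI)
  fix v a B
  show "Rep_endo (T i * T j) v (a, B) = Rep_endo (T j * (T i :: 'k endo)) v (a, B)"
    by (cases "i = j") (auto simp add: Rep_endo_times Rep_T fun_upd_twist)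
qed

lemma T_E: "T i * E j = E j * (T i::'k::field endo)"
  by (rule endo_eqI) (auto simp add: Rep_endo_times Rep_T Rep_E)

lemma D_T: "D * T i - T i * D = (E i :: 'k::field endo)"
proof (rule endo_eqI)
  fix v :: "'k vec" and a B
  define f where "f j = sgn_below j (B - {j}) * of_nat (Suc (a j)) * (if 0 < (a(j := Suc (a j))) i then v ((a(j := Suc (a j)))(i := (a(j := Suc (a j))) i - 1), B - {j}) else 0)" for j
  define g where "g j = (if 0 < a i then sgn_below j (B - {j}) * of_nat (Suc ((a(i := a i - 1)) j)) * v ((a(i := a i - 1))(j := Suc ((a(i := a i - 1)) j)), B - {j}) else 0)" for j
  have L: "Rep_endo (D * T i) v (a,B) = (\<Sum>j\<in>B. f j)"
    unfolding f_def by (simp add: Rep_endo_times Rep_D Rep_T)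
  have R: "Rep_endo (T i * D) v (a,B) = (\<Sum>j\<in>B. g j)"
    unfolding g_def by (cases "0 < a i") (simp_all add: Rep_endo_times Rep_D Rep_T)
  have fg: "f j = g j" if "j \<noteq> i" for j
    using that by (cases "0 < a i") (simp_all add: f_def g_def fun_upd_twist)
  have fgi: "f i - g i = sgn_below i (B - {i}) * v (a, B - {i})"
    by (cases "0 < a i") (simp_all add: f_def g_def algebra_simps fun_upd_idem)
  show "Rep_endo (D * T i - T i * D) v (a, B) = Rep_endo (E i) v (a, B)"
  proof (cases "finite B")
    case False
    thus ?thesis by (simp add: Rep_endo_minus L R Rep_E)
  next
    case True
    have "Rep_endo (D * T i - T i * D) v (a, B) = (\<Sum>j\<in>B. f j - g j)"
      by (simp add: Rep_endo_minus L R sum_subtractf)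
    also have "\<dots> = (if i \<in> B then f i - g i else 0)"
    proof (cases "i \<in> B")
      case True
      have "(\<Sum>j\<in>B. f j - g j) = (f i - g i) + (\<Sum>j\<in>B - {i}. f j - g j)"
        using True \<open>finite B\<close> by (simp add: sum.remove)
      also have "(\<Sum>j\<in>B - {i}. f j - g j) = 0"
        by (rule sum.neutral) (simp add: fg)
      finally show ?thesis using True by simp
    next
      case False
      hence "(\<Sum>j\<in>B. f j - g j) = 0"
        by (intro sum.neutral) (metis fg diff_self)
      thus ?thesis using False by simp
    qed
    also have "\<dots> = Rep_endo (E i) v (a, B)"
      using True fgi by (simp add: Rep_E)
    finally show ?thesis .
  qed
qed

lemma sum_offdiag_antisym_eq_0:
  fixes G :: "'b \<Rightarrow> 'b \<Rightarrow> 'a::field"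
  assumes "finite B"
    and antisym: "\<And>i j. i \<in> B \<Longrightarrow> j \<in> B \<Longrightarrow> i \<noteq> j \<Longrightarrow> G j i = - G i j"
    and two: "(2::'a) \<noteq> 0"
  shows "(\<Sum>i\<in>B. \<Sum>j\<in>B - {i}. G i j) = 0"
proof -
  let ?S = "\<Sum>i\<in>B. \<Sum>j\<in>B - {i}. G i j"
  have "?S = (\<Sum>i\<in>B. \<Sum>j\<in>{j. j \<in> B \<and> i \<noteq> j}. G i j)"
    by (intro sum.cong) auto
  also have "\<dots> = (\<Sum>j\<in>B. \<Sum>i\<in>{i. i \<in> B \<and> i \<noteq> j}. G i j)"
    by (rule sum.swap_restrict[OF \<open>finite B\<close> \<open>finite B\<close>])
  also have "\<dots> = (\<Sum>j\<in>B. \<Sum>i\<in>B - {j}. - G j i)"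
    using antisym by (intro sum.cong) auto
  also have "\<dots> = - ?S"
    by (simp add: sum_negf)
  finally have "2 * ?S = 0"
    by simp
  then show ?thesis
    using two by simp
qed

lemma Rep_D_D:
  "Rep_endo (D * D) v (a, B) = (\<Sum>i\<in>B. \<Sum>j\<in>B - {i}.
     (sgn_below i (B - {i}) * sgn_below j (B - {i} - {j})) * (of_nat (Suc (a i)) * of_nat (Suc (a j))
       * v (a(i := Suc (a i), j := Suc (a j)), B - {i} - {j})))"
  unfolding Rep_endo_times Rep_D
  by (intro sum.cong refl) (auto simp add: sum_distrib_left mult_ac intro!: sum.cong)

lemma D_D:
  assumes two: "(2::'k::field) \<noteq> 0"
  shows "D * D = (0 :: 'k endo)"
proof (rule endo_eqI)
  fix v :: "'k vec" and a B
  show "Rep_endo (D * D) v (a, B) = Rep_endo 0 v (a, B)"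
  proof (cases "finite B")
    case fin: True
    show ?thesis
      unfolding Rep_D_D Rep_endo_zero
    proof (rule sum_offdiag_antisym_eq_0[OF fin _ two])
      fix i j assume ij: "i \<in> B" "j \<in> B" "i \<noteq> j"
      have "B - {j} - {i} = B - {i} - {j}"
        by auto
      then have H: "of_nat (Suc (a j)) * of_nat (Suc (a i)) * v (a(j := Suc (a j), i := Suc (a i)), B - {j} - {i})
          = of_nat (Suc (a i)) * of_nat (Suc (a j)) * v (a(i := Suc (a i), j := Suc (a j)), B - {i} - {j})"
        using ij by (simp add: fun_upd_twist mult.commute)
      show "sgn_below j (B - {j}) * sgn_below i (B - {j} - {i}) *
          (of_nat (Suc (a j)) * of_nat (Suc (a i)) * v (a(j := Suc (a j), i := Suc (a i)), B - {j} - {i}))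
        = - (sgn_below i (B - {i}) * sgn_below j (B - {i} - {j}) *
          (of_nat (Suc (a i)) * of_nat (Suc (a j)) * v (a(i := Suc (a i), j := Suc (a j)), B - {i} - {j})))"
        unfolding H sgn_below_swap[OF fin ij(2,1) ij(3)[symmetric]] by simp
    qed
  qed (simp add: Rep_D_D Rep_endo_zero)
qed

section \<open>The differential on operators\<close>

lemma Par_Par_left: "Par * (Par * Z) = (Z::'k::field endo)"
  by (simp add: mult.assoc[symmetric] Par_Par)

definition par_conj :: "'k::field endo \<Rightarrow> 'k endo" where
  "par_conj X = Par * X * Par"

text \<open>The supercommutator with \<open>D\<close>: on the multiplication operator by a form \<open>\<omega>\<close> it is
  multiplication by \<open>d\<omega>\<close>.\<close>

definition dif :: "'k::field endo \<Rightarrow> 'k endo" where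
  "dif X = D * X - par_conj X * D"

lemma par_conj_mult: "par_conj (X * Y) = par_conj X * par_conj Y"
  by (simp add: par_conj_def mult.assoc Par_Par_left)
lemma par_conj_add: "par_conj (X + Y) = par_conj X + par_conj Y"
  by (simp add: par_conj_def algebra_simps)
lemma par_conj_diff: "par_conj (X - Y) = par_conj X - par_conj Y"
  by (simp add: par_conj_def algebra_simps)
lemma par_conj_zero: "par_conj 0 = 0"
  by (simp add: par_conj_def)
lemma par_conj_one: "par_conj 1 = 1"
  by (simp add: par_conj_def Par_Par)
lemma par_conj_scal: "par_conj (scal c) = scal c"
  by (simp add: par_conj_def scal_commute mult.assoc Par_Par Par_Par_left)
lemma par_conj_par_conj: "par_conj (par_conj X) = X"
  by (simp add: par_conj_def mult.assoc Par_Par_left) (simp add: mult.assoc[symmetric] Par_Par)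
lemma par_conj_T: "par_conj (T i) = T i"
  by (simp add: par_conj_def Par_T mult.assoc Par_Par)
lemma par_conj_E: "par_conj (E i) = - E i"
  by (simp add: par_conj_def Par_E mult.assoc Par_Par)
lemma par_conj_D: "par_conj D = - D"
  by (simp add: par_conj_def Par_D mult.assoc Par_Par)

lemma dif_mult: "dif (X * Y) = dif X * Y + par_conj X * dif Y"
  by (simp add: dif_def par_conj_mult algebra_simps)
lemma dif_add: "dif (X + Y) = dif X + dif Y"
  by (simp add: dif_def par_conj_add algebra_simps)
lemma dif_zero: "dif 0 = 0"
  by (simp add: dif_def par_conj_zero)
lemma dif_scal: "dif (scal c) = 0"
  by (simp add: dif_def par_conj_scal scal_commute)
lemma dif_one: "dif 1 = 0"
  by (simp add: dif_def par_conj_one)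
lemma dif_T: "dif (T i) = E i"
  by (simp add: dif_def par_conj_T D_T)

lemma par_conj_D_mult: "par_conj (D * X) = - (D * par_conj X)"
  by (simp add: par_conj_def mult.assoc[symmetric] Par_D)

lemma dif_par_conj: "dif (par_conj X) = - par_conj (dif X)"
proof -
  have "par_conj (par_conj X * D) = X * par_conj D" by (simp add: par_conj_mult par_conj_par_conj)
  thus ?thesis by (simp add: dif_def par_conj_par_conj par_conj_diff par_conj_D_mult par_conj_D)
qed

lemma dif_dif:
  assumes two: "(2::'k::field) \<noteq> 0"
  shows "dif (dif X) = (0::'k endo)"
proof -
  have DD: "D * D = (0::'k endo)" using D_D[OF two] .
  have t: "par_conj (dif X) = - (D * par_conj X) + X * D"
    by (simp add: dif_def par_conj_diff par_conj_D_mult par_conj_mult par_conj_par_conj par_conj_D)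
  have "dif (dif X) = D * (D * X - par_conj X * D) - par_conj (dif X) * D"
    by (simp add: dif_def)
  also have "\<dots> = (D * D) * X - D * par_conj X * D + D * par_conj X * D - X * (D * D)"
    unfolding t by (simp add: algebra_simps)
  finally show ?thesis by (simp add: DD)
qed

section \<open>Degrees and the top coefficient\<close>

definition basis_vec :: "(nat \<Rightarrow> nat) \<Rightarrow> nat set \<Rightarrow> 'k::field vec" where
  "basis_vec a0 B0 = (\<lambda>(a,B). if a = a0 \<and> B = B0 then 1 else 0)"

definition top_exps :: "nat \<Rightarrow> nat \<Rightarrow> nat \<Rightarrow> nat" where
  "top_exps p n = (\<lambda>i. if i \<in> {1..n} then p - 1 else 0)"

text \<open>The coefficient of \<open>t\<^sub>1\<^sup>p\<^sup>-\<^sup>1 \<cdots> t\<^sub>n\<^sup>p\<^sup>-\<^sup>1 e\<^sub>1 \<cdots> e\<^sub>n\<close> in the image of the series \<open>1\<close>.\<close>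

definition top_coeff :: "nat \<Rightarrow> nat \<Rightarrow> 'k::field endo \<Rightarrow> 'k" where
  "top_coeff p n X = Rep_endo X (basis_vec (\<lambda>_. 0) {}) (top_exps p n, {1..n})"

lemma top_coeff_add: "top_coeff p n (X + Y) = top_coeff p n X + top_coeff p n Y"
  by (simp add: top_coeff_def Rep_endo_plus)
lemma top_coeff_zero: "top_coeff p n 0 = 0"
  by (simp add: top_coeff_def Rep_endo_zero)
lemma top_coeff_scal_mult: "top_coeff p n (scal c * X) = c * top_coeff p n X"
  by (simp add: top_coeff_def Rep_endo_times Rep_scal)

lemma D_vacuum: "Rep_endo D (basis_vec (\<lambda>_. 0) {}) = (\<lambda>x. (0::'k::field))"
proof
  fix x :: "(nat \<Rightarrow> nat) \<times> nat set"
  obtain a B where x: "x = (a,B)" by (cases x)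
  have "\<And>i. a(i := Suc (a i)) \<noteq> (\<lambda>_. 0)"
  proof
    fix i assume "a(i := Suc (a i)) = (\<lambda>_. 0)"
    hence "(a(i := Suc (a i))) i = 0" by simp
    thus False by simp
  qed
  thus "Rep_endo D (basis_vec (\<lambda>_. 0) {}) x = (0::'k)"
    unfolding x by (simp add: Rep_D basis_vec_def)
qed

lemma top_coeff_dif:
  assumes p: "of_nat p = (0::'k::field)" "1 \<le> p"
  shows "top_coeff p n (dif Y) = (0::'k)"
proof -
  have "top_coeff p n (dif Y) = Rep_endo D (Rep_endo Y (basis_vec (\<lambda>_. 0) {})) (top_exps p n, {1..n})"
    by (simp add: top_coeff_def dif_def Rep_endo_minus Rep_endo_times D_vacuum Rep_endo_zero_vec)
  also have "\<dots> = 0"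
  proof -
    have "\<And>i. i \<in> {1..n} \<Longrightarrow> (of_nat (Suc (top_exps p n i)) :: 'k) = 0"
      using p by (simp add: top_exps_def)
    thus ?thesis by (simp add: Rep_D)
  qed
  finally show ?thesis .
qed

definition ext_degree :: "'k::field vec \<Rightarrow> nat \<Rightarrow> bool" where
  "ext_degree v r \<longleftrightarrow> (\<forall>a B. v (a,B) \<noteq> 0 \<longrightarrow> finite B \<and> card B = r)"

definition homog :: "nat \<Rightarrow> 'k::field endo \<Rightarrow> bool" where
  "homog k X \<longleftrightarrow> (\<forall>v r. ext_degree v r \<longrightarrow> ext_degree (Rep_endo X v) (r + k))"

lemma homog_pointwise:
  assumes "homog k X" "homog k Y"
    and "\<And>v a B. Rep_endo Z v (a,B) \<noteq> 0 \<Longrightarrow> Rep_endo X v (a,B) \<noteq> 0 \<or> Rep_endo Y v (a,B) \<noteq> 0"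
  shows "homog k Z"
  unfolding homog_def ext_degree_def
proof (intro allI impI)
  fix v :: "'a vec" and r a B
  assume s: "\<forall>a B. v (a, B) \<noteq> 0 \<longrightarrow> finite B \<and> card B = r"
  assume nz: "Rep_endo Z v (a, B) \<noteq> 0"
  have hx: "\<forall>a B. Rep_endo X v (a,B) \<noteq> 0 \<longrightarrow> finite B \<and> card B = r + k"
    using assms(1) s unfolding homog_def ext_degree_def by blast
  have hy: "\<forall>a B. Rep_endo Y v (a,B) \<noteq> 0 \<longrightarrow> finite B \<and> card B = r + k"
    using assms(2) s unfolding homog_def ext_degree_def by blast
  from assms(3)[OF nz] hx hy show "finite B \<and> card B = r + k" by blast
qed

lemma homog_add: "homog k X \<Longrightarrow> homog k Y \<Longrightarrow> homog k (X + Y)"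
  by (erule homog_pointwise, assumption) (auto simp add: Rep_endo_plus)
lemma homog_diff: "homog k X \<Longrightarrow> homog k Y \<Longrightarrow> homog k (X - Y)"
  by (erule homog_pointwise, assumption) (auto simp add: Rep_endo_minus)
lemma homog_scal_mult: "homog k X \<Longrightarrow> homog k (scal c * X)"
  by (rule homog_pointwise[where X=X and Y=X]) (auto simp add: Rep_endo_times Rep_scal)
lemma homog_mult:
  assumes hx: "homog k X" and hy: "homog l Y" shows "homog (k + l) (X * Y)"
  unfolding homog_def
proof (intro allI impI)
  fix v :: "'a vec" and r assume "ext_degree v r"
  hence "ext_degree (Rep_endo Y v) (r + l)" using hy unfolding homog_def by blast
  hence "ext_degree (Rep_endo X (Rep_endo Y v)) (r + l + k)" using hx unfolding homog_def by blast
  thus "ext_degree (Rep_endo (X * Y) v) (r + (k + l))" by (simp add: Rep_endo_times add_ac)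
qed
lemma homog_one: "homog 0 1"
  unfolding homog_def by (simp add: Rep_endo_one)
lemma homog_scal: "homog 0 (scal c)"
  using homog_scal_mult[OF homog_one, of c] by simp
lemma homog_T: "homog 0 (T i)"
  unfolding homog_def ext_degree_def
proof (intro allI impI)
  fix v :: "'a vec" and r a B
  assume h: "\<forall>a B. v (a, B) \<noteq> 0 \<longrightarrow> finite B \<and> card B = r"
  assume "Rep_endo (T i) v (a, B) \<noteq> 0"
  hence "v (a(i := a i - 1), B) \<noteq> 0" by (simp add: Rep_T split: if_splits)
  with h show "finite B \<and> card B = r + 0" by simp
qed
lemma homog_Par: "homog 0 Par"
  unfolding homog_def ext_degree_def by (simp add: Rep_Par)
lemma homog_par_conj: "homog k X \<Longrightarrow> homog k (par_conj X)"
  unfolding par_conj_def using homog_mult[OF homog_mult[OF homog_Par], OF _ homog_Par]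
  by simp

lemma homog_D: "homog 1 D"
  unfolding homog_def ext_degree_def
proof (intro allI impI)
  fix v :: "'a vec" and r a B
  assume h: "\<forall>a B. v (a, B) \<noteq> 0 \<longrightarrow> finite B \<and> card B = r"
  assume nz: "Rep_endo D v (a, B) \<noteq> 0"
  hence fin: "finite B" by (auto simp add: Rep_D intro: ccontr)
  from nz obtain i where i: "i \<in> B"
    "sgn_below i (B - {i}) * of_nat (a i + 1) * v (a(i := a i + 1), B - {i}) \<noteq> 0"
    unfolding Rep_D by (meson sum.not_neutral_contains_not_neutral)
  hence "v (a(i := a i + 1), B - {i}) \<noteq> 0" by auto
  with h have "card (B - {i}) = r" by blast
  with fin i show "finite B \<and> card B = r + 1"
    using card_Suc_Diff1[of B i] by simp
qed

lemma homog_dif: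
  assumes "homog 0 X" shows "homog 1 (dif X)"
proof -
  have "homog (1 + 0) (D * X)" using homog_mult[OF homog_D assms] .
  moreover have "homog (0 + 1) (par_conj X * D)" using homog_mult[OF homog_par_conj[OF assms] homog_D] .
  ultimately show ?thesis unfolding dif_def using homog_diff by simp
qed

lemma top_coeff_homog: "homog k X \<Longrightarrow> k \<noteq> n \<Longrightarrow> top_coeff p n X = 0"
proof -
  assume h: "homog k X" and k: "k \<noteq> n"
  have "ext_degree (basis_vec (\<lambda>_. 0) {} :: 'a vec) 0"
    by (simp add: ext_degree_def basis_vec_def)
  with h have "ext_degree (Rep_endo X (basis_vec (\<lambda>_. 0) {})) k"
    unfolding homog_def by fastforce
  thus ?thesis using k unfolding ext_degree_def top_coeff_def by fastforce
qed

section \<open>The supercommutative subalgebra\<close>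

inductive even_el :: "'k::field endo \<Rightarrow> bool" and odd_el :: "'k::field endo \<Rightarrow> bool" where
  even_T: "even_el (T i)"
| even_scal: "even_el (scal c)"
| even_add: "even_el X \<Longrightarrow> even_el Y \<Longrightarrow> even_el (X + Y)"
| even_mult: "even_el X \<Longrightarrow> even_el Y \<Longrightarrow> even_el (X * Y)"
| odd_odd_mult: "odd_el X \<Longrightarrow> odd_el Y \<Longrightarrow> even_el (X * Y)"
| odd_E: "odd_el (E i)"
| odd_zero: "odd_el 0"
| odd_add: "odd_el X \<Longrightarrow> odd_el Y \<Longrightarrow> odd_el (X + Y)"
| even_odd_mult: "even_el X \<Longrightarrow> odd_el Y \<Longrightarrow> odd_el (X * Y)"
| odd_even_mult: "odd_el X \<Longrightarrow> even_el Y \<Longrightarrow> odd_el (X * Y)"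

lemma even_zero: "even_el 0" using even_scal[of 0] by (simp add: scal_zero)
lemma even_one: "even_el 1" using even_scal[of 1] by (simp add: scal_one)
lemma even_uminus: "even_el X \<Longrightarrow> even_el (- X)"
  using even_mult[OF even_scal[of "-1"]] by (simp add: scal_minus scal_one)
lemma odd_uminus: "odd_el X \<Longrightarrow> odd_el (- X)"
  using even_odd_mult[OF even_scal[of "-1"]] by (simp add: scal_minus scal_one)
lemma even_diff: "even_el X \<Longrightarrow> even_el Y \<Longrightarrow> even_el (X - Y)"
  using even_add[OF _ even_uminus] by simp
lemma odd_diff: "odd_el X \<Longrightarrow> odd_el Y \<Longrightarrow> odd_el (X - Y)"
  using odd_add[OF _ odd_uminus] by simp
lemma even_power: "even_el X \<Longrightarrow> even_el (X ^ k)"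
  by (induction k) (simp_all add: even_one even_mult)

lemma par_conj_even_odd:
  "even_el X \<Longrightarrow> par_conj X = X"
  "odd_el X \<Longrightarrow> par_conj X = - X"
  by (induction rule: even_el_odd_el.inducts)
     (simp_all add: par_conj_T par_conj_scal par_conj_add par_conj_mult par_conj_E par_conj_zero)

lemma T_commute:
  "even_el X \<Longrightarrow> T i * X = X * T i"
  "odd_el X \<Longrightarrow> T i * X = X * T i"
proof (induction rule: even_el_odd_el.inducts)
  case (even_T j) show ?case by (rule T_T)
next
  case (even_scal c) show ?case by (rule scal_commute[symmetric])
next
  case (even_add X Y) thus ?case by (simp add: algebra_simps)
next
  case (even_mult X Y) thus ?case by (metis mult.assoc)
next
  case (odd_odd_mult X Y) thus ?case by (metis mult.assoc)
next
  case (odd_E j) show ?case by (rule T_E)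
next
  case odd_zero show ?case by simp
next
  case (odd_add X Y) thus ?case by (simp add: algebra_simps)
next
  case (even_odd_mult X Y) thus ?case by (metis mult.assoc)
next
  case (odd_even_mult X Y) thus ?case by (metis mult.assoc)
qed

lemma E_supercommute:
  "even_el X \<Longrightarrow> E i * X = X * E i"
  "odd_el X \<Longrightarrow> E i * X = - (X * E i)"
proof (induction rule: even_el_odd_el.inducts)
  case (even_T j) show ?case by (rule T_E[symmetric])
next
  case (even_scal c) show ?case by (rule scal_commute[symmetric])
next
  case (even_add X Y) thus ?case by (simp add: algebra_simps)
next
  case (even_mult X Y)
  have "E i * (X * Y) = X * (E i * Y)" by (metis even_mult.IH(1) mult.assoc)
  thus ?case by (simp add: even_mult.IH(2) mult.assoc)
next
  case (odd_odd_mult X Y)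
  have "E i * (X * Y) = - (X * (E i * Y))" by (metis odd_odd_mult.IH(1) mult.assoc mult_minus_left)
  thus ?case by (simp add: odd_odd_mult.IH(2) mult.assoc)
next
  case (odd_E j) show ?case by (rule E_E)
next
  case odd_zero show ?case by simp
next
  case (odd_add X Y) thus ?case by (simp add: algebra_simps)
next
  case (even_odd_mult X Y)
  have "E i * (X * Y) = X * (E i * Y)" by (metis even_odd_mult.IH(1) mult.assoc)
  thus ?case by (simp add: even_odd_mult.IH(2) mult.assoc)
next
  case (odd_even_mult X Y)
  have "E i * (X * Y) = - (X * (E i * Y))" by (metis odd_even_mult.IH(1) mult.assoc mult_minus_left)
  thus ?case by (simp add: odd_even_mult.IH(2) mult.assoc)
qed

lemma supercommute:
  "even_el X \<Longrightarrow> (even_el Z \<longrightarrow> X * Z = Z * X) \<and> (odd_el Z \<longrightarrow> X * Z = Z * X)"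
  "odd_el X \<Longrightarrow> (even_el Z \<longrightarrow> X * Z = Z * X) \<and> (odd_el Z \<longrightarrow> X * Z = - (Z * X))"
proof (induction rule: even_el_odd_el.inducts)
  case (even_T j) show ?case using T_commute by blast
next
  case (even_scal c) show ?case by (simp add: scal_commute)
next
  case (even_add X Y) thus ?case by (simp add: algebra_simps)
next
  case (even_mult X Y)
  show ?case
  proof (intro conjI impI)
    assume "even_el Z" thus "X * Y * Z = Z * (X * Y)" using even_mult.IH by (metis mult.assoc)
  next
    assume "odd_el Z" thus "X * Y * Z = Z * (X * Y)" using even_mult.IH by (metis mult.assoc)
  qed
next
  case (odd_odd_mult X Y)
  show ?case
  proof (intro conjI impI)
    assume "even_el Z" thus "X * Y * Z = Z * (X * Y)" using odd_odd_mult.IH by (metis mult.assoc)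
  next
    assume z: "odd_el Z"
    have "X * Y * Z = - (X * (Z * Y))" using odd_odd_mult.IH z by (simp add: mult.assoc)
    also have "\<dots> = - (X * Z * Y)" by (simp add: mult.assoc)
    also have "\<dots> = Z * X * Y" using odd_odd_mult.IH z by simp
    finally show "X * Y * Z = Z * (X * Y)" by (simp add: mult.assoc)
  qed
next
  case (odd_E j) show ?case using E_supercommute by (metis minus_minus)
next
  case odd_zero show ?case by simp
next
  case (odd_add X Y) thus ?case by (simp add: algebra_simps)
next
  case (even_odd_mult X Y)
  show ?case
  proof (intro conjI impI)
    assume "even_el Z" thus "X * Y * Z = Z * (X * Y)" using even_odd_mult.IH by (metis mult.assoc)
  next
    assume z: "odd_el Z"
    have "X * Y * Z = X * (Y * Z)" by (simp add: mult.assoc)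
    also have "\<dots> = - (X * Z * Y)" using even_odd_mult.IH(2) z by (simp add: mult.assoc)
    also have "\<dots> = - (Z * X * Y)" using even_odd_mult.IH(1) z by simp
    finally show "X * Y * Z = - (Z * (X * Y))" by (simp add: mult.assoc)
  qed
next
  case (odd_even_mult X Y)
  show ?case
  proof (intro conjI impI)
    assume "even_el Z" thus "X * Y * Z = Z * (X * Y)" using odd_even_mult.IH by (metis mult.assoc)
  next
    assume z: "odd_el Z"
    have "X * Y * Z = X * (Z * Y)" using odd_even_mult.IH z by (simp add: mult.assoc)
    also have "\<dots> = - (Z * X * Y)" using odd_even_mult.IH z by (simp add: mult.assoc[symmetric])
    finally show "X * Y * Z = - (Z * (X * Y))" by (simp add: mult.assoc)
  qed
qed

lemma even_commute: "even_el X \<Longrightarrow> even_el Z \<or> odd_el Z \<Longrightarrow> X * Z = Z * X"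
  using supercommute(1) by blast
lemma odd_anticommute: "odd_el X \<Longrightarrow> odd_el Z \<Longrightarrow> X * Z = - (Z * X)"
  using supercommute(2) by blast

lemma odd_square:
  assumes two: "(2::'k::field) \<noteq> 0" and "odd_el X"
  shows "X * X = (0::'k endo)"
proof -
  have h: "X * X = - (X * X)" using odd_anticommute[OF assms(2) assms(2)] .
  have "X * X + X * X = 0" by (subst h) simp
  thus ?thesis using endo_double_eq_0[OF two] by blast
qed

lemma odd_mult_odd_square:
  assumes two: "(2::'k::field) \<noteq> 0" and "odd_el X" "odd_el Y"
  shows "(X * Y) * (X * Y) = (0::'k endo)"
proof -
  have "(X * Y) * (X * Y) = X * (Y * X) * Y" by (simp add: mult.assoc)
  also have "\<dots> = - (X * X * (Y * Y))" using odd_anticommute[OF assms(3) assms(2)] by (simp add: mult.assoc)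
  also have "\<dots> = 0" using odd_square[OF two assms(2)] by simp
  finally show ?thesis .
qed

lemma dif_even_odd:
  assumes two: "(2::'k::field) \<noteq> 0"
  shows "even_el X \<Longrightarrow> odd_el (dif X)" "odd_el X \<Longrightarrow> even_el (dif (X::'k endo))"
proof (induction rule: even_el_odd_el.inducts)
  case (even_T i) show ?case by (simp add: dif_T odd_E)
next
  case (even_scal c) show ?case by (simp add: dif_scal odd_zero)
next
  case (even_add X Y) thus ?case by (simp add: dif_add odd_add)
next
  case (even_mult X Y) thus ?case
    by (simp add: dif_mult par_conj_even_odd odd_add even_odd_mult odd_even_mult)
next
  case (odd_odd_mult X Y) thus ?case
    by (simp add: dif_mult par_conj_even_odd odd_diff even_odd_mult odd_even_mult)
next
  case (odd_E i)
  have "dif (E i) = (0::'k endo)" using dif_dif[OF two, of "T i"] by (simp add: dif_T)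
  thus ?case by (simp add: even_zero)
next
  case odd_zero show ?case by (simp add: dif_zero even_zero)
next
  case (odd_add X Y) thus ?case by (simp add: dif_add even_add)
next
  case (even_odd_mult X Y) thus ?case
    by (simp add: dif_mult par_conj_even_odd even_add even_mult odd_odd_mult)
next
  case (odd_even_mult X Y) thus ?case
    by (simp add: dif_mult par_conj_even_odd even_diff even_mult odd_odd_mult)
qed

section \<open>Pure elements and the closed forms \<open>\<beta>\<close>\<close>

inductive pure_el :: "'k::field endo \<Rightarrow> bool" where
  pure_T: "pure_el (T i)"
| pure_scal: "pure_el (scal c)"
| pure_add: "pure_el X \<Longrightarrow> pure_el Y \<Longrightarrow> pure_el (X + Y)"
| pure_mult: "pure_el X \<Longrightarrow> pure_el Y \<Longrightarrow> pure_el (X * Y)"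

lemma pure_even: "pure_el X \<Longrightarrow> even_el X"
  by (induction rule: pure_el.induct) (simp_all add: even_T even_scal even_add even_mult)

lemma pure_homog: "pure_el X \<Longrightarrow> homog 0 X"
  by (induction rule: pure_el.induct) (auto simp add: homog_T homog_scal homog_add dest: homog_mult)

lemma pure_zero: "pure_el 0" using pure_scal[of 0] by (simp add: scal_zero)
lemma pure_one: "pure_el 1" using pure_scal[of 1] by (simp add: scal_one)
lemma pure_power: "pure_el X \<Longrightarrow> pure_el (X ^ k)"
  by (induction k) (simp_all add: pure_one pure_mult)

inductive pure_mod_nil :: "'k::field endo \<Rightarrow> bool" where
  pure_mod_nil_pure: "pure_el P \<Longrightarrow> pure_mod_nil P"
| pure_mod_nil_add_square_zero: "pure_mod_nil X \<Longrightarrow> even_el Z \<Longrightarrow> Z * Z = 0 \<Longrightarrow> pure_mod_nil (X + Z)"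

lemma pure_mod_nil_even: "pure_mod_nil X \<Longrightarrow> even_el X"
  by (induction rule: pure_mod_nil.induct) (simp_all add: pure_even even_add)

lemma square_zero_mult:
  assumes "even_el X" "even_el Z" "Z * Z = 0"
  shows "(X * Z) * (X * Z) = 0" "(Z * X) * (Z * X) = 0"
proof -
  have c: "X * Z = Z * X"
    using even_commute[OF assms(1)] assms(2) by blast
  have "(X * Z) * (X * Z) = X * (Z * X) * Z"
    by (simp add: mult.assoc)
  also have "\<dots> = X * X * (Z * Z)"
    by (simp add: c[symmetric] mult.assoc)
  finally show "(X * Z) * (X * Z) = 0"
    using assms(3) by simp
  then show "(Z * X) * (Z * X) = 0"
    using c by simp
qed

lemma pure_mod_nil_add_pure:
  assumes "pure_mod_nil X" and P: "pure_el P"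
  shows "pure_mod_nil (X + P)"
  using assms(1)
proof induction
  case (pure_mod_nil_pure Q)
  then show ?case
    by (simp add: pure_add P pure_mod_nil.pure_mod_nil_pure)
next
  case (pure_mod_nil_add_square_zero X Z)
  then have "pure_mod_nil ((X + P) + Z)"
    by (blast intro: pure_mod_nil.pure_mod_nil_add_square_zero)
  then show ?case
    by (simp add: algebra_simps)
qed

lemma pure_mod_nil_add:
  assumes "pure_mod_nil Y" and X: "pure_mod_nil X"
  shows "pure_mod_nil (X + Y)"
  using assms(1)
proof induction
  case (pure_mod_nil_pure P)
  then show ?case
    using pure_mod_nil_add_pure X by blast
next
  case (pure_mod_nil_add_square_zero Y Z)
  then have "pure_mod_nil ((X + Y) + Z)"
    by (blast intro: pure_mod_nil.pure_mod_nil_add_square_zero)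
  then show ?case
    by (simp add: algebra_simps)
qed

lemma pure_mod_nil_mult_pure:
  assumes "pure_mod_nil X" and P: "pure_el P"
  shows "pure_mod_nil (X * P)"
  using assms(1)
proof induction
  case (pure_mod_nil_pure Q)
  then show ?case
    by (simp add: pure_mult P pure_mod_nil.pure_mod_nil_pure)
next
  case (pure_mod_nil_add_square_zero X Z)
  have "even_el (Z * P)" "(Z * P) * (Z * P) = 0"
    using pure_mod_nil_add_square_zero.hyps P square_zero_mult(2)[OF pure_even]
    by (auto intro: even_mult pure_even)
  then have "pure_mod_nil (X * P + Z * P)"
    using pure_mod_nil_add_square_zero.IH by (blast intro: pure_mod_nil.pure_mod_nil_add_square_zero)
  then show ?case
    by (simp add: algebra_simps)
qed

lemma pure_mod_nil_mult:
  assumes "pure_mod_nil Y" and X: "pure_mod_nil X"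
  shows "pure_mod_nil (X * Y)"
  using assms(1)
proof induction
  case (pure_mod_nil_pure P)
  then show ?case
    using pure_mod_nil_mult_pure X by blast
next
  case (pure_mod_nil_add_square_zero Y Z)
  have "even_el (X * Z)" "(X * Z) * (X * Z) = 0"
    using pure_mod_nil_add_square_zero.hyps X square_zero_mult(1)[OF pure_mod_nil_even]
    by (auto intro: even_mult pure_mod_nil_even)
  then have "pure_mod_nil (X * Y + X * Z)"
    using pure_mod_nil_add_square_zero.IH by (blast intro: pure_mod_nil.pure_mod_nil_add_square_zero)
  then show ?case
    by (simp add: algebra_simps)
qed

lemma pure_mod_nil_odd_odd_mult:
  assumes two: "(2::'k::field) \<noteq> 0" and "odd_el X" "odd_el (Y::'k endo)"
  shows "pure_mod_nil (X * Y)"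
proof -
  have "pure_mod_nil (0 + X * Y)"
    by (rule pure_mod_nil_add_square_zero)
       (simp_all add: pure_mod_nil_pure pure_zero odd_odd_mult assms odd_mult_odd_square[OF two])
  then show ?thesis
    by simp
qed

lemma even_pure_mod_nil:
  assumes two: "(2::'k::field) \<noteq> 0" and "even_el (X::'k endo)"
  shows "pure_mod_nil X"
  using assms(2)
  by (induction rule: even_el_odd_el.inducts(1)[where ?P2.0 = "\<lambda>_. True"])
     (simp_all add: pure_mod_nil_pure pure_T pure_scal pure_mod_nil_add pure_mod_nil_mult
       pure_mod_nil_odd_odd_mult[OF two])

definition beta :: "nat \<Rightarrow> 'k::field endo \<Rightarrow> 'k endo" where
  "beta p Q = Q ^ (p - 1) * dif Q"

lemma even_power_commute: "even_el X \<Longrightarrow> even_el Z \<or> odd_el Z \<Longrightarrow> X ^ k * Z = Z * X ^ k"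
  using even_commute[OF even_power] by blast

lemma dif_power:
  assumes two: "(2::'k::field) \<noteq> 0" and X: "even_el (X::'k endo)"
  shows "dif (X ^ Suc m) = of_nat (Suc m) * X ^ m * dif X"
proof (induction m)
  case 0 show ?case by simp
next
  case (Suc m)
  have c1: "odd_el (dif X)" using dif_even_odd(1)[OF two X] .
  have "dif (X ^ Suc (Suc m)) = dif (X * X ^ Suc m)" by (simp only: power_Suc)
  also have "\<dots> = dif X * X ^ Suc m + X * dif (X ^ Suc m)" by (simp only: dif_mult par_conj_even_odd(1)[OF X])
  also have "dif X * X ^ Suc m = X ^ Suc m * dif X"
    using even_power_commute[OF X] c1 by metis
  also have "X * dif (X ^ Suc m) = of_nat (Suc m) * X ^ Suc m * dif X"
  proof -
    have "X * dif (X ^ Suc m) = (X * of_nat (Suc m)) * X ^ m * dif X" unfolding Suc by (simp only: mult.assoc)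
    also have "X * of_nat (Suc m) = of_nat (Suc m) * X" by (rule mult_of_nat_commute[symmetric])
    finally show ?thesis by (simp only: power_Suc mult.assoc)
  qed
  finally show ?case by (simp add: algebra_simps)
qed

lemma power_add_square_zero:
  fixes R Z :: "'a::ring_1"
  assumes c: "R * Z = Z * R" and z: "Z * Z = 0"
  shows "(R + Z) ^ Suc m = R ^ Suc m + of_nat (Suc m) * R ^ m * Z"
proof (induction m)
  case 0
  show ?case
    by simp
next
  case (Suc m)
  have cp: "R ^ k * Z = Z * R ^ k" for k
    using power_commuting_commutes[OF c] .
  have "(R + Z) ^ Suc (Suc m) = (R + Z) * (R ^ Suc m + of_nat (Suc m) * R ^ m * Z)"
    by (simp only: power_Suc[of _ "Suc m"] Suc)
  also have "\<dots> = R ^ Suc (Suc m) + of_nat (Suc m) * R ^ Suc m * Z + Z * R ^ Suc m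
      + of_nat (Suc m) * (Z * R ^ m * Z)"
    by (simp add: algebra_simps mult_of_nat_commute)
  also have "Z * R ^ m * Z = 0"
    using z by (simp add: mult.assoc cp[symmetric])
  also have "Z * R ^ Suc m = R ^ Suc m * Z"
    by (rule cp[symmetric])
  finally show ?case
    by (simp add: algebra_simps)
qed

lemma beta_add_square_zero:
  assumes two: "(2::'k::field) \<noteq> 0" and p: "2 \<le> p"
    and R: "even_el R" and Z: "even_el Z" and z: "Z * Z = 0"
  shows "beta p (R + Z) = beta p R + dif (R ^ (p - 1) * (Z::'k endo))"
proof -
  define q where "q = p - 2"
  have q: "p - 1 = Suc q" using p unfolding q_def by arith
  have c: "R * Z = Z * R" using even_commute[OF R] Z by blast
  have dR: "odd_el (dif R)" and dZ: "odd_el (dif Z)" using dif_even_odd(1)[OF two] R Z by blast+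
  have zdz: "Z * dif Z = 0"
  proof -
    have "0 = dif (Z * Z)" using z by (simp add: dif_zero)
    also have "\<dots> = dif Z * Z + Z * dif Z" by (simp only: dif_mult par_conj_even_odd(1)[OF Z])
    also have "dif Z * Z = Z * dif Z" using even_commute[OF Z] dZ by metis
    finally have "Z * dif Z + Z * dif Z = 0" by simp
    thus ?thesis using endo_double_eq_0[OF two] by blast
  qed
  have pw: "(R + Z) ^ Suc q = R ^ Suc q + of_nat (Suc q) * R ^ q * Z"
    using power_add_square_zero[OF c z] .
  have ddpow: "dif (R ^ Suc q) = of_nat (Suc q) * R ^ q * dif R"
    using dif_power[OF two R] .
  have cRq: "Z * dif R = dif R * Z" using even_commute[OF Z] dR by metis
  let ?A = "R ^ Suc q" and ?c = "of_nat (Suc q) :: 'k endo"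
  have "beta p (R + Z) = (?A + ?c * R ^ q * Z) * (dif R + dif Z)"
    unfolding beta_def q pw by (simp only: dif_add)
  also have "\<dots> = ?A * dif R + ?A * dif Z + ?c * R ^ q * (Z * dif R) + ?c * R ^ q * (Z * dif Z)"
    by (simp add: distrib_left distrib_right mult.assoc add_ac)
  also have "\<dots> = ?A * dif R + (?c * R ^ q * dif R * Z + ?A * dif Z)"
    unfolding zdz cRq by (simp add: mult.assoc add_ac)
  also have "?c * R ^ q * dif R * Z + ?A * dif Z = dif (?A * Z)"
    by (simp only: dif_mult ddpow par_conj_even_odd(1)[OF even_power[OF R]])
  finally show ?thesis unfolding beta_def q .
qed

lemma beta_pure_mod_nil:
  assumes two: "(2::'k::field) \<noteq> 0" and p: "2 \<le> p"
  shows "pure_mod_nil Q \<Longrightarrow> \<exists>P \<eta>. pure_el P \<and> beta p Q = beta p P + dif (\<eta>::'k endo)"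
proof (induction rule: pure_mod_nil.induct)
  case (pure_mod_nil_pure P)
  show ?case by (rule exI[of _ P], rule exI[of _ 0]) (simp add: pure_mod_nil_pure dif_zero)
next
  case (pure_mod_nil_add_square_zero X Z)
  then obtain P \<eta> where P: "pure_el P" "beta p X = beta p P + dif \<eta>" by blast
  have "beta p (X + Z) = beta p X + dif (X ^ (p - 1) * Z)"
    by (rule beta_add_square_zero[OF two p pure_mod_nil_even[OF pure_mod_nil_add_square_zero.hyps(1)] pure_mod_nil_add_square_zero.hyps(2,3)])
  also have "\<dots> = beta p P + dif (\<eta> + X ^ (p - 1) * Z)" using P by (simp add: dif_add)
  finally show ?case using P by blast
qed

lemma beta_pure_homog: "pure_el P \<Longrightarrow> homog 1 (beta p P)"
  unfolding beta_def
  using homog_mult[OF pure_homog[OF pure_power] homog_dif[OF pure_homog]] by simp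

lemma dif_beta:
  assumes two: "(2::'k::field) \<noteq> 0" and p: "2 \<le> p" and R: "even_el (R::'k endo)"
  shows "dif (beta p R) = 0"
proof -
  define q where "q = p - 2"
  have q: "p - 1 = Suc q" using p unfolding q_def by arith
  have dR: "odd_el (dif R)" using dif_even_odd(1)[OF two R] .
  have "dif (beta p R) = of_nat (Suc q) * R ^ q * (dif R * dif R) + R ^ Suc q * dif (dif R)"
    unfolding beta_def q
    by (simp add: dif_mult dif_power[OF two R] par_conj_even_odd(1)[OF even_power[OF R]] mult.assoc del: power_Suc)
  thus ?thesis using odd_square[OF two dR] dif_dif[OF two] by simp
qed

section \<open>The elements \<open>Q + d Q\<close> and the values of \<open>\<kappa>\<close>\<close>

definition graph_el :: "'k::field endo \<Rightarrow> bool" where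
  "graph_el X \<longleftrightarrow> (\<exists>Q. even_el Q \<and> X = Q + dif Q)"

lemma graph_el_zero: "graph_el 0"
  unfolding graph_el_def by (rule exI[of _ 0]) (simp add: even_zero dif_zero)
lemma graph_el_scal: "graph_el (scal c)"
  unfolding graph_el_def by (rule exI[of _ "scal c"]) (simp add: even_scal dif_scal)
lemma graph_el_one: "graph_el 1"
  using graph_el_scal[of 1] by (simp add: scal_one)
lemma graph_el_add:
  assumes "graph_el X" "graph_el Y" shows "graph_el (X + Y)"
proof -
  obtain Q where Q: "even_el Q" "X = Q + dif Q" using assms(1) graph_el_def by blast
  obtain R where R: "even_el R" "Y = R + dif R" using assms(2) graph_el_def by blast
  have "X + Y = (Q + R) + dif (Q + R)" unfolding Q(2) R(2) dif_add by (simp add: add_ac)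
  thus ?thesis unfolding graph_el_def using even_add[OF Q(1) R(1)] by blast
qed
lemma graph_el_T_E: "graph_el (T i + E i)"
  unfolding graph_el_def by (rule exI[of _ "T i"]) (simp add: even_T dif_T)

lemma graph_el_mult:
  assumes two: "(2::'k::field) \<noteq> 0" and gx: "graph_el X" and gy: "graph_el (Y::'k endo)"
  shows "graph_el (X * Y)"
proof -
  obtain Q where Q: "even_el Q" "X = Q + dif Q" using gx unfolding graph_el_def by blast
  obtain R where R: "even_el R" "Y = R + dif R" using gy unfolding graph_el_def by blast
  have dQ: "odd_el (dif Q)" using dif_even_odd(1)[OF two Q(1)] .
  have dR: "odd_el (dif R)" using dif_even_odd(1)[OF two R(1)] .
  let ?Q' = "Q * R + dif Q * dif R"
  have C: "even_el ?Q'" by (rule even_add[OF even_mult[OF Q(1) R(1)] odd_odd_mult[OF dQ dR]])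
  have e1: "dif ?Q' = dif Q * R + Q * dif R"
  proof -
    have a: "dif (Q * R) = dif Q * R + Q * dif R" by (simp only: dif_mult par_conj_even_odd(1)[OF Q(1)])
    have b: "dif (dif Q * dif R) = 0" by (simp only: dif_mult dif_dif[OF two] mult_zero_left mult_zero_right add_0)
    show ?thesis by (simp only: dif_add a b add_0_right)
  qed
  have e2: "X * Y = ?Q' + (dif Q * R + Q * dif R)"
    unfolding Q(2) R(2) by (simp add: distrib_left distrib_right add_ac)
  have "X * Y = ?Q' + dif ?Q'" unfolding e2 e1 ..
  thus ?thesis unfolding graph_el_def using C by blast
qed

lemma graph_el_scal_mult: "(2::'k::field) \<noteq> 0 \<Longrightarrow> graph_el X \<Longrightarrow> graph_el (scal c * (X::'k endo))"
  using graph_el_mult graph_el_scal by blast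

definition kappa_op :: "nat \<Rightarrow> 'k::field endo \<Rightarrow> 'k endo \<Rightarrow> 'k endo" where
  "kappa_op p X Y = (X * Y - Y * X) * (X ^ (p - 1) * Y ^ (p - 1))"

lemma mult_power_add_eq:
  fixes W R Z :: "'a::ring_1"
  assumes c: "R * Z = Z * R" and w: "W * Z = 0"
  shows "W * (R + Z) ^ k = W * R ^ k"
proof (induction k)
  case (Suc k)
  have "W * R ^ k * Z = W * Z * R ^ k"
    using power_commuting_commutes[OF c] by (simp add: mult.assoc)
  then have "W * R ^ k * Z = 0"
    using w by simp
  then show ?case
    using Suc by (simp only: power_Suc2 mult.assoc[symmetric] distrib_left add_0_right)
qed simp

lemma kappa_op_graph_el:
  assumes two: "(2::'k::field) \<noteq> 0" and Q: "even_el Q" and R: "even_el R"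
  shows "kappa_op p (Q + dif Q) (R + dif R) = 2 * (beta p Q * beta p (R::'k endo))"
proof -
  let ?O = "dif Q" and ?U = "dif R" and ?q = "p - 1"
  have O: "odd_el ?O" and U: "odd_el ?U"
    using dif_even_odd(1)[OF two] Q R by blast+
  have cQO: "Q * ?O = ?O * Q" and cQU: "Q * ?U = ?U * Q"
    and cRO: "R * ?O = ?O * R" and cRU: "R * ?U = ?U * R"
    using even_commute Q R O U by blast+
  have cQR: "Q * R = R * Q"
    using even_commute Q R by blast
  have aOU: "?U * ?O = - (?O * ?U)"
    using odd_anticommute[OF U O] .
  have OO: "?O * ?O = 0" and UU: "?U * ?U = 0"
    using odd_square[OF two] O U by blast+
  have comm: "(Q + ?O) * (R + ?U) - (R + ?U) * (Q + ?O) = 2 * (?O * ?U)"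
    by (simp add: algebra_simps cQR cQU cRO aOU mult_2)
  have "?O * ?U * ?O = - (?O * ?O * ?U)"
    by (simp add: mult.assoc aOU)
  then have powQ: "?O * ?U * (Q + ?O) ^ ?q = ?O * ?U * Q ^ ?q"
    using mult_power_add_eq[OF cQO] OO by simp
  have "?O * ?U * Q ^ ?q * ?U = ?O * (?U * ?U) * Q ^ ?q"
    using power_commuting_commutes[OF cQU] by (simp add: mult.assoc)
  then have powR: "?O * ?U * Q ^ ?q * (R + ?U) ^ ?q = ?O * ?U * Q ^ ?q * R ^ ?q"
    using mult_power_add_eq[OF cRU] UU by simp
  have "beta p Q * beta p R = ?O * (Q ^ ?q * R ^ ?q * ?U)"
    unfolding beta_def using power_commuting_commutes[OF cQO] by (simp add: mult.assoc)
  also have "Q ^ ?q * R ^ ?q * ?U = ?U * Q ^ ?q * R ^ ?q"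
    using power_commuting_commutes[OF cQU] power_commuting_commutes[OF cRU] by (metis mult.assoc)
  finally have "beta p Q * beta p R = ?O * ?U * Q ^ ?q * R ^ ?q"
    by (simp add: mult.assoc)
  moreover have "kappa_op p (Q + ?O) (R + ?U) = 2 * (?O * ?U * (Q + ?O) ^ ?q * (R + ?U) ^ ?q)"
    unfolding kappa_op_def comm by (simp add: mult.assoc)
  ultimately show ?thesis
    using powQ powR by simp
qed

section \<open>Vanishing of the top coefficient\<close>

lemma closed_exact_mult:
  assumes two: "(2::'k::field) \<noteq> 0" and c1: "dif g1 = 0" and c2: "dif g2 = (0::'k endo)"
  shows "(g1 + dif e1) * (g2 + dif e2) = g1 * g2 + dif (par_conj g1 * e2 + e1 * g2 + e1 * dif e2)"
    and "dif (g1 * g2) = 0"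
proof -
  have a: "dif (par_conj g1 * e2) = g1 * dif e2"
    by (simp add: dif_mult dif_par_conj c1 par_conj_zero par_conj_par_conj)
  have b: "dif (e1 * g2) = dif e1 * g2" by (simp add: dif_mult c2)
  have c: "dif (e1 * dif e2) = dif e1 * dif e2" by (simp add: dif_mult dif_dif[OF two])
  show "(g1 + dif e1) * (g2 + dif e2) = g1 * g2 + dif (par_conj g1 * e2 + e1 * g2 + e1 * dif e2)"
    unfolding dif_add a b c by (simp add: distrib_left distrib_right add_ac)
  show "dif (g1 * g2) = 0" by (simp add: dif_mult c1 c2)
qed

lemma prod_list_closed_exact:
  assumes two: "(2::'k::field) \<noteq> 0" and cl: "\<forall>x\<in>set xs. dif (g x) = (0::'k endo)"
  shows "\<exists>H. prod_list (map (\<lambda>x. g x + dif (e x)) xs) = prod_list (map g xs) + dif H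
           \<and> dif (prod_list (map g xs)) = 0"
  using cl
proof (induction xs)
  case Nil show ?case by (rule exI[of _ 0]) (simp add: dif_zero dif_one)
next
  case (Cons x xs)
  then obtain H where H: "prod_list (map (\<lambda>x. g x + dif (e x)) xs) = prod_list (map g xs) + dif H"
    and c: "dif (prod_list (map g xs)) = 0" by auto
  have cx: "dif (g x) = 0" using Cons.prems by simp
  show ?case
    using closed_exact_mult(1)[OF two cx c, of "e x" H] closed_exact_mult(2)[OF two cx c] H by auto
qed

lemma homog_prod_list:
  "\<forall>x\<in>set xs. homog k (g x) \<Longrightarrow> homog (k * length xs) (prod_list (map g xs))"
proof (induction xs)
  case Nil show ?case by (simp add: homog_one)
next
  case (Cons x xs)
  hence "homog (k + k * length xs) (g x * prod_list (map g xs))"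
    by (intro homog_mult) auto
  thus ?case by simp
qed

lemma kappa_op_closed_exact:
  assumes two: "(2::'k::field) \<noteq> 0" and p: "2 \<le> p"
    and gx: "graph_el X" and gy: "graph_el (Y::'k endo)"
  shows "\<exists>\<gamma> \<epsilon>. kappa_op p X Y = \<gamma> + dif \<epsilon> \<and> dif \<gamma> = 0 \<and> homog 2 \<gamma>"
proof -
  obtain Q where Q: "even_el Q" "X = Q + dif Q" using gx unfolding graph_el_def by blast
  obtain R where R: "even_el R" "Y = R + dif R" using gy unfolding graph_el_def by blast
  obtain P1 e1 where P1: "pure_el P1" "beta p Q = beta p P1 + dif e1"
    using beta_pure_mod_nil[OF two p even_pure_mod_nil[OF two Q(1)]] by blast
  obtain P2 e2 where P2: "pure_el P2" "beta p R = beta p P2 + dif e2"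
    using beta_pure_mod_nil[OF two p even_pure_mod_nil[OF two R(1)]] by blast
  let ?g1 = "2 * beta p P1" and ?g2 = "beta p P2"
  have c1: "dif ?g1 = 0"
    using dif_beta[OF two p pure_even[OF P1(1)]] by (simp add: mult_2 dif_add)
  have c2: "dif ?g2 = 0" using dif_beta[OF two p pure_even[OF P2(1)]] .
  have "kappa_op p X Y = 2 * (beta p Q * beta p R)"
    unfolding Q(2) R(2) by (rule kappa_op_graph_el[OF two Q(1) R(1)])
  also have "\<dots> = (?g1 + dif (2 * e1)) * (?g2 + dif e2)"
    unfolding P1(2) P2(2) by (simp add: mult_2 dif_add distrib_left distrib_right add_ac)
  also have "\<dots> = ?g1 * ?g2 + dif (par_conj ?g1 * e2 + 2 * e1 * ?g2 + 2 * e1 * dif e2)"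
    by (rule closed_exact_mult(1)[OF two c1 c2])
  finally have eq: "kappa_op p X Y = ?g1 * ?g2 + dif (par_conj ?g1 * e2 + 2 * e1 * ?g2 + 2 * e1 * dif e2)" .
  have "homog (1 + 1) (?g1 * ?g2)"
  proof (rule homog_mult)
    show "homog 1 ?g1" unfolding mult_2
      using homog_add[OF beta_pure_homog[OF P1(1)] beta_pure_homog[OF P1(1)]] .
    show "homog 1 ?g2" using beta_pure_homog[OF P2(1)] .
  qed
  moreover have "dif (?g1 * ?g2) = 0" using closed_exact_mult(2)[OF two c1 c2] .
  ultimately show ?thesis using eq by (metis one_add_one)
qed

lemma top_coeff_prod_kappa_op_eq_0:
  assumes two: "(2::'k::field) \<noteq> 0" and p: "2 \<le> p" and pz: "of_nat p = (0::'k)"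
    and gx: "\<forall>r\<in>set xs. graph_el (X r)" and gy: "\<forall>r\<in>set xs. graph_el (Y r :: 'k endo)"
    and n: "2 * length xs \<noteq> n"
  shows "top_coeff p n (prod_list (map (\<lambda>r. kappa_op p (X r) (Y r)) xs)) = 0"
proof -
  have "\<forall>r\<in>set xs. \<exists>\<gamma> \<epsilon>. kappa_op p (X r) (Y r) = \<gamma> + dif \<epsilon> \<and> dif \<gamma> = 0 \<and> homog 2 \<gamma>"
    using kappa_op_closed_exact[OF two p] gx gy by blast
  then obtain G Ep where GE: "\<forall>r\<in>set xs. kappa_op p (X r) (Y r) = G r + dif (Ep r) \<and> dif (G r) = 0 \<and> homog 2 (G r)"
    by metis
  have "prod_list (map (\<lambda>r. kappa_op p (X r) (Y r)) xs) = prod_list (map (\<lambda>r. G r + dif (Ep r)) xs)"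
    using GE by (intro arg_cong[where f=prod_list] map_cong) auto
  moreover obtain H where "prod_list (map (\<lambda>r. G r + dif (Ep r)) xs) = prod_list (map G xs) + dif H"
    using prod_list_closed_exact[OF two, of xs G Ep] GE by blast
  moreover have "homog (2 * length xs) (prod_list (map G xs))"
    using homog_prod_list[of xs 2 G] GE by blast
  ultimately show ?thesis
    using top_coeff_homog[OF _ n] top_coeff_dif[OF pz] p by (simp add: top_coeff_add)
qed

section \<open>The top coefficient at \<open>t\<^sub>i + e\<^sub>i\<close>\<close>

lemma Rep_E_basis_vec:
  assumes "finite B" "i \<notin> B"
  shows "Rep_endo (E i) (basis_vec a B) = (\<lambda>x. sgn_below i B * (basis_vec a (insert i B) x :: 'k::field))"
proof
  fix x :: "(nat \<Rightarrow> nat) \<times> nat set"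
  obtain a' B' where x: "x = (a',B')" by (cases x)
  show "Rep_endo (E i) (basis_vec a B) x = sgn_below i B * (basis_vec a (insert i B) x :: 'k)"
  proof (cases "finite B' \<and> i \<in> B' \<and> B' - {i} = B")
    case True
    hence "B' = insert i B" by auto
    thus ?thesis using True unfolding x by (simp add: Rep_E basis_vec_def)
  next
    case False
    moreover have "B' = insert i B \<Longrightarrow> finite B' \<and> i \<in> B' \<and> B' - {i} = B" using assms by auto
    ultimately show ?thesis unfolding x by (auto simp add: Rep_E basis_vec_def)
  qed
qed

lemma Rep_T_basis_vec: "Rep_endo (T i) (basis_vec a B) = (basis_vec (a(i := Suc (a i))) B :: 'k::field vec)"
proof (rule ext, unfold split_paired_all)
  fix a' B'
  have "(0 < a' i \<and> a'(i := a' i - 1) = a) \<longleftrightarrow> a' = a(i := Suc (a i))"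
    by (auto simp add: fun_eq_iff)
  then show "Rep_endo (T i) (basis_vec a B) (a', B') = (basis_vec (a(i := Suc (a i))) B (a', B') :: 'k)"
    by (auto simp add: Rep_T basis_vec_def)
qed

lemma Rep_T_power_basis_vec: "Rep_endo (T i ^ k) (basis_vec a B) = (basis_vec (a(i := a i + k)) B :: 'k::field vec)"
proof (induction k arbitrary: a)
  case 0 thus ?case by (simp add: Rep_endo_one)
next
  case (Suc k)
  have "Rep_endo (T i ^ Suc k) (basis_vec a B) = Rep_endo (T i ^ k) (Rep_endo (T i) (basis_vec a B))"
    by (simp add: power_Suc2 Rep_endo_times del: power_Suc)
  also have "\<dots> = (basis_vec ((a(i := Suc (a i)))(i := (a(i := Suc (a i))) i + k)) B :: 'k vec)"
    by (simp only: Rep_T_basis_vec Suc.IH)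
  also have "(a(i := Suc (a i)))(i := (a(i := Suc (a i))) i + k) = a(i := a i + Suc k)" by simp
  finally show ?case .
qed

definition tail_exps :: "nat \<Rightarrow> nat \<Rightarrow> nat \<Rightarrow> nat \<Rightarrow> nat" where
  "tail_exps p n k = (\<lambda>i. if k \<le> i \<and> i \<le> n then p - 1 else 0)"

lemma Rep_prod_TE_vacuum:
  assumes "1 \<le> k"
  shows "Rep_endo (prod_list (map (\<lambda>i. T i ^ (p - 1) * E i) [k..<Suc n])) (basis_vec (\<lambda>_. 0) {})
     = (basis_vec (tail_exps p n k) {k..n} :: 'k::field vec)"
  using assms
proof (induction "Suc n - k" arbitrary: k)
  case 0
  hence "n < k" by simp
  hence "tail_exps p n k = (\<lambda>_. 0)" "{k..n} = {}" by (auto simp add: tail_exps_def fun_eq_iff)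
  thus ?case using \<open>n < k\<close> by (simp add: Rep_endo_one)
next
  case (Suc d)
  hence kn: "k \<le> n" by simp
  have l: "[k..<Suc n] = k # [Suc k..<Suc n]" using kn by (simp add: upt_conv_Cons)
  have IH: "Rep_endo (prod_list (map (\<lambda>i. T i ^ (p - 1) * E i) [Suc k..<Suc n])) (basis_vec (\<lambda>_. 0) {})
     = (basis_vec (tail_exps p n (Suc k)) {Suc k..n} :: 'k vec)"
    using Suc by simp
  have sg: "sgn_below k {Suc k..n} = (1::'k)"
  proof -
    have e: "{c \<in> {Suc k..n}. c < k} = {}" by auto
    show ?thesis unfolding sgn_below_def e by simp
  qed
  have ins: "insert k {Suc k..n} = {k..n}" using kn by auto
  have al: "(tail_exps p n (Suc k))(k := tail_exps p n (Suc k) k + (p - Suc 0)) = tail_exps p n k"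
    using kn by (auto simp add: tail_exps_def fun_eq_iff)
  show ?case
    unfolding l using IH
    by (simp add: Rep_endo_times Rep_E_basis_vec Rep_T_power_basis_vec sg ins al Rep_scal[symmetric]
        scal_one Rep_endo_one del: power_Suc)
qed

lemma two_power_scal: "(2::'k::field endo) ^ m = scal (2 ^ m)"
proof -
  have "(2::'k endo) ^ m = of_nat (2 ^ m)" by simp
  also have "\<dots> = scal (of_nat (2 ^ m))" by (rule of_nat_endo)
  finally show ?thesis by simp
qed

lemma prod_list_pairs:
  fixes Y :: "nat \<Rightarrow> 'a::ring_1"
  shows "prod_list (map (\<lambda>r. 2 * (Y (2 * r - 1) * Y (2 * r))) [1..<m + 1])
     = 2 ^ m * prod_list (map Y [1..<2 * m + 1])"
proof (induction m)
  case 0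
  show ?case
    by simp
next
  case (Suc m)
  have l1: "[1..<Suc m + 1] = [1..<m + 1] @ [Suc m]"
    by simp
  have l2: "[1..<2 * Suc m + 1] = [1..<2 * m + 1] @ [2 * m + 1, 2 * m + 2]"
    by (simp add: upt_rec[of "2 * m + 1"] upt_Suc_append[symmetric])
  let ?P = "prod_list (map Y [1..<2 * m + 1])"
  have "prod_list (map (\<lambda>r. 2 * (Y (2 * r - 1) * Y (2 * r))) [1..<Suc m + 1])
      = 2 ^ m * ?P * (2 * (Y (2 * m + 1) * Y (2 * m + 2)))"
    unfolding l1 using Suc by simp
  also have "\<dots> = 2 ^ Suc m * (?P * (Y (2 * m + 1) * Y (2 * m + 2)))"
    by (simp add: mult.assoc mult_of_nat_commute[of 2, simplified] power_Suc2)
  also have "?P * (Y (2 * m + 1) * Y (2 * m + 2)) = prod_list (map Y [1..<2 * Suc m + 1])"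
    unfolding l2 by (simp add: mult.assoc del: upt_Suc)
  finally show ?case .
qed

lemma top_coeff_prod_kappa_op_T_E:
  assumes two: "(2::'k::field) \<noteq> 0" and p: "2 \<le> p"
  shows "top_coeff p (2 * m) (prod_list (map (\<lambda>r. kappa_op p (T (2 * r - 1) + E (2 * r - 1)) (T (2 * r) + E (2 * r))) [1..<m + 1]))
     = (2 ^ m :: 'k)"
proof -
  let ?Y = "\<lambda>i. T i ^ (p - 1) * (E i :: 'k endo)"
  have k: "kappa_op p (T a + E a) (T b + E b) = 2 * (?Y a * ?Y b)" for a b
    using kappa_op_graph_el[OF two even_T[of a] even_T[of b]] by (simp add: dif_T beta_def)
  have "prod_list (map (\<lambda>r. kappa_op p (T (2 * r - 1) + E (2 * r - 1)) (T (2 * r) + E (2 * r))) [1..<m + 1])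
      = prod_list (map (\<lambda>r. 2 * (?Y (2 * r - 1) * ?Y (2 * r))) [1..<m + 1])"
    by (simp only: k)
  also have "\<dots> = 2 ^ m * prod_list (map ?Y [1..<2 * m + 1])" by (rule prod_list_pairs)
  finally have e: "prod_list (map (\<lambda>r. kappa_op p (T (2 * r - 1) + E (2 * r - 1)) (T (2 * r) + E (2 * r))) [1..<m + 1])
      = 2 ^ m * prod_list (map ?Y [1..<Suc (2 * m)])" by simp
  have a: "tail_exps p (2 * m) 1 = top_exps p (2 * m)"
    by (auto simp add: tail_exps_def top_exps_def fun_eq_iff)
  have py: "Rep_endo (prod_list (map ?Y [1..<Suc (2 * m)])) (basis_vec (\<lambda>_. 0) {}) = basis_vec (top_exps p (2 * m)) {1..2 * m}"
    using Rep_prod_TE_vacuum[of 1 p "2 * m"] a by simp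
  show ?thesis
    unfolding e top_coeff_def Rep_endo_times py
    by (simp add: two_power_scal Rep_scal basis_vec_def)
qed

section \<open>Evaluation of noncommutative polynomials at operators\<close>

definition fin_supp :: "('k::field) ncpoly \<Rightarrow> bool" where
  "fin_supp f \<longleftrightarrow> finite {w. f w \<noteq> 0}"

definition mon_op :: "(nat \<Rightarrow> 'k::field endo) \<Rightarrow> nat list \<Rightarrow> 'k endo" where
  "mon_op a w = prod_list (map a w)"

definition eval_op :: "(nat \<Rightarrow> 'k::field endo) \<Rightarrow> 'k ncpoly \<Rightarrow> 'k endo" where
  "eval_op a f = (\<Sum>w\<in>{w. f w \<noteq> 0}. scal (f w) * mon_op a w)"

lemma mon_op_append: "mon_op a (u @ v) = mon_op a u * mon_op a v"
  by (simp add: mon_op_def)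

lemma eval_op_superset:
  assumes "finite A" "{w. f w \<noteq> 0} \<subseteq> A"
  shows "eval_op a f = (\<Sum>w\<in>A. scal (f w) * mon_op a w)"
  unfolding eval_op_def
  by (rule sum.mono_neutral_left[OF assms]) (auto simp add: scal_zero)

lemma fin_supp_one: "fin_supp nc_one" by (simp add: fin_supp_def nc_one_def)
lemma fin_supp_var: "fin_supp (nc_var i)" by (simp add: fin_supp_def nc_var_def)
lemma fin_supp_add: "fin_supp f \<Longrightarrow> fin_supp g \<Longrightarrow> fin_supp (nc_add f g)"
  unfolding fin_supp_def nc_add_def
  by (rule finite_subset[of _ "{w. f w \<noteq> 0} \<union> {w. g w \<noteq> 0}"]) auto
lemma fin_supp_smult: "fin_supp f \<Longrightarrow> fin_supp (nc_smult c f)"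
  unfolding fin_supp_def nc_smult_def
  by (rule finite_subset[of _ "{w. f w \<noteq> 0}"]) auto

lemma supp_nc_mul:
  "{w. nc_mul f g w \<noteq> 0} \<subseteq> (\<lambda>(u,v). u @ v) ` ({w. f w \<noteq> 0} \<times> {w. g w \<noteq> 0})"
proof
  fix w assume "w \<in> {w. nc_mul f g w \<noteq> 0}"
  then obtain i where "i \<le> length w" "f (take i w) * g (drop i w) \<noteq> 0"
    unfolding nc_mul_def by (auto elim: sum.not_neutral_contains_not_neutral)
  hence "f (take i w) \<noteq> 0" "g (drop i w) \<noteq> 0" by auto
  moreover have "w = take i w @ drop i w" by simp
  ultimately show "w \<in> (\<lambda>(u,v). u @ v) ` ({w. f w \<noteq> 0} \<times> {w. g w \<noteq> 0})"
    by (metis (mono_tags, lifting) SigmaI case_prod_conv image_eqI mem_Collect_eq)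
qed

lemma fin_supp_mul: "fin_supp f \<Longrightarrow> fin_supp g \<Longrightarrow> fin_supp (nc_mul f g)"
  unfolding fin_supp_def using supp_nc_mul finite_subset by blast

lemma fin_supp_pow: "fin_supp u \<Longrightarrow> fin_supp (nc_pow u k)"
  by (induction k) (simp_all add: fin_supp_one fin_supp_mul)

lemma fin_supp_comm: "fin_supp f \<Longrightarrow> fin_supp g \<Longrightarrow> fin_supp (nc_comm f g)"
  unfolding nc_comm_def by (simp add: fin_supp_add fin_supp_smult fin_supp_mul)

lemma fin_supp_kappa: "fin_supp f \<Longrightarrow> fin_supp g \<Longrightarrow> fin_supp (kappa p f g)"
  unfolding kappa_def by (simp add: fin_supp_comm fin_supp_mul fin_supp_pow)

lemma eval_op_zero: "eval_op a nc_zero = 0"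
  by (simp add: eval_op_def nc_zero_def)

lemma eval_op_one: "eval_op a nc_one = 1"
proof -
  have "{w. nc_one w \<noteq> (0::'a)} = {[]}" by (auto simp add: nc_one_def)
  thus ?thesis by (simp add: eval_op_def nc_one_def scal_one mon_op_def)
qed

lemma eval_op_var: "eval_op a (nc_var i) = a i"
proof -
  have "{w. nc_var i w \<noteq> (0::'a)} = {[i]}" by (auto simp add: nc_var_def)
  thus ?thesis by (simp add: eval_op_def nc_var_def scal_one mon_op_def)
qed

lemma eval_op_add:
  assumes "fin_supp f" "fin_supp g"
  shows "eval_op a (nc_add f g) = eval_op a f + eval_op a g"
proof -
  let ?A = "{w. f w \<noteq> 0} \<union> {w. g w \<noteq> 0}"
  have fin: "finite ?A" using assms by (simp add: fin_supp_def)
  have "eval_op a (nc_add f g) = (\<Sum>w\<in>?A. scal (nc_add f g w) * mon_op a w)"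
    by (rule eval_op_superset[OF fin]) (auto simp add: nc_add_def)
  also have "\<dots> = (\<Sum>w\<in>?A. scal (f w) * mon_op a w) + (\<Sum>w\<in>?A. scal (g w) * mon_op a w)"
    by (simp add: nc_add_def scal_add[symmetric] distrib_right sum.distrib)
  also have "\<dots> = eval_op a f + eval_op a g"
    by (simp add: eval_op_superset[OF fin])
  finally show ?thesis .
qed

lemma eval_op_smult:
  assumes "fin_supp f"
  shows "eval_op a (nc_smult c f) = scal c * eval_op a f"
proof -
  let ?A = "{w. f w \<noteq> 0}"
  have fin: "finite ?A" using assms by (simp add: fin_supp_def)
  have "eval_op a (nc_smult c f) = (\<Sum>w\<in>?A. scal (nc_smult c f w) * mon_op a w)"
    by (rule eval_op_superset[OF fin]) (auto simp add: nc_smult_def)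
  also have "\<dots> = scal c * (\<Sum>w\<in>?A. scal (f w) * mon_op a w)"
    by (simp add: nc_smult_def sum_distrib_left scal_mult[symmetric] mult.assoc)
  also have "\<dots> = scal c * eval_op a f" by (simp add: eval_op_def)
  finally show ?thesis .
qed

lemma scal_mult_mon_op_append:
  "scal (x * y) * mon_op a (u @ v) = (scal x * mon_op a u) * (scal y * mon_op a v)"
proof -
  have "scal (x * y) * mon_op a (u @ v) = scal x * (scal y * mon_op a u) * mon_op a v"
    by (simp add: mon_op_append scal_mult[symmetric] mult.assoc)
  also have "scal y * mon_op a u = mon_op a u * scal y"
    by (rule scal_commute)
  finally show ?thesis
    by (simp add: mult.assoc)
qed

lemma bij_betw_append_split:
  "bij_betw (\<lambda>(u, v). (u @ v, length u)) (A \<times> B)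
     {(w, i). i \<le> length w \<and> take i w \<in> A \<and> drop i w \<in> B}"
  by (rule bij_betw_byWitness[where f' = "\<lambda>(w, i). (take i w, drop i w)"]) (auto simp add: min_def)

lemma eval_op_mul:
  assumes ff: "fin_supp f" and fg: "fin_supp g"
  shows "eval_op a (nc_mul f g) = eval_op a f * eval_op a g"
proof -
  let ?Sf = "{w. f w \<noteq> 0}" and ?Sg = "{w. g w \<noteq> 0}"
  let ?A = "(\<lambda>(u, v). u @ v) ` (?Sf \<times> ?Sg)"
  let ?Sig = "Sigma ?A (\<lambda>w. {..length w})"
  let ?Z = "{(w, i). i \<le> length w \<and> take i w \<in> ?Sf \<and> drop i w \<in> ?Sg}"
  define F where "F = (\<lambda>(w, i). scal (f (take i w) * g (drop i w)) * mon_op a w)"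
  have finA: "finite ?A"
    using ff fg by (simp add: fin_supp_def)
  have finSig: "finite ?Sig"
    using finA by (intro finite_SigmaI) auto
  have Z_sub: "?Z \<subseteq> ?Sig"
  proof
    fix x assume "x \<in> ?Z"
    then obtain w i where x: "x = (w, i)" "i \<le> length w" "take i w \<in> ?Sf" "drop i w \<in> ?Sg"
      by blast
    then have "w \<in> ?A"
      using image_eqI[of w "\<lambda>(u, v). u @ v" "(take i w, drop i w)"] by auto
    then show "x \<in> ?Sig"
      using x by auto
  qed
  have "eval_op a (nc_mul f g) = (\<Sum>w\<in>?A. scal (nc_mul f g w) * mon_op a w)"
    by (rule eval_op_superset[OF finA supp_nc_mul])
  also have "\<dots> = (\<Sum>w\<in>?A. \<Sum>i\<in>{..length w}. F (w, i))"
    by (simp add: nc_mul_def F_def scal_sum sum_distrib_right)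
  also have "\<dots> = (\<Sum>x\<in>?Sig. F x)"
    using sum.Sigma[OF finA, of "\<lambda>w. {..length w}" "\<lambda>w i. F (w, i)"] by simp
  also have "\<dots> = (\<Sum>x\<in>?Z. F x)"
    by (rule sum.mono_neutral_right[OF finSig Z_sub]) (auto simp add: F_def scal_zero)
  also have "\<dots> = (\<Sum>x\<in>?Sf \<times> ?Sg. F ((\<lambda>(u, v). (u @ v, length u)) x))"
    by (rule sum.reindex_bij_betw[OF bij_betw_append_split, symmetric])
  also have "\<dots> = (\<Sum>(u, v)\<in>?Sf \<times> ?Sg. (scal (f u) * mon_op a u) * (scal (g v) * mon_op a v))"
    by (intro sum.cong refl) (auto simp add: F_def scal_mult_mon_op_append)
  also have "\<dots> = eval_op a f * eval_op a g"
    by (simp add: eval_op_def sum_product sum.cartesian_product)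
  finally show ?thesis .
qed

lemma eval_op_pow: "fin_supp u \<Longrightarrow> eval_op a (nc_pow u k) = eval_op a u ^ k"
  by (induction k) (simp_all add: eval_op_one eval_op_mul fin_supp_pow)

lemma eval_op_comm: "fin_supp f \<Longrightarrow> fin_supp g \<Longrightarrow> eval_op a (nc_comm f g) = eval_op a f * eval_op a g - eval_op a g * eval_op a f"
  unfolding nc_comm_def
  by (simp add: eval_op_add eval_op_smult eval_op_mul fin_supp_mul fin_supp_smult scal_minus scal_one)

lemma eval_op_kappa: "fin_supp f \<Longrightarrow> fin_supp g \<Longrightarrow> eval_op a (kappa p f g) = kappa_op p (eval_op a f) (eval_op a g)"
  unfolding kappa_def kappa_op_def
  by (simp add: eval_op_mul eval_op_pow eval_op_comm fin_supp_comm fin_supp_mul fin_supp_pow)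

lemma eval_op_foldr:
  assumes "\<forall>r. fin_supp (K r)" "fin_supp z"
  shows "fin_supp (foldr (\<lambda>r acc. nc_mul (K r) acc) xs z) \<and>
         eval_op a (foldr (\<lambda>r acc. nc_mul (K r) acc) xs z) = prod_list (map (\<lambda>r. eval_op a (K r)) xs) * eval_op a z"
  by (induction xs) (simp_all add: assms fin_supp_mul eval_op_mul mult.assoc)

lemma butlast_upt: "1 \<le> m \<Longrightarrow> butlast [1..<m+1] @ [m] = [1..<m+1]"
proof -
  assume "1 \<le> m"
  hence "[1..<m+1] = [1..<m] @ [m]" by simp
  thus ?thesis by simp
qed

lemma eval_op_w_poly:
  assumes m: "1 \<le> m" and fu: "\<forall>i. fin_supp (u i)"
  shows "fin_supp (w_poly p m u) \<and>
    eval_op a (w_poly p m u) = prod_list (map (\<lambda>r. kappa_op p (eval_op a (u (2*r - 1))) (eval_op a (u (2*r)))) [1..<m+1])"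
proof -
  let ?K = "\<lambda>r. kappa p (u (2*r - 1)) (u (2*r))"
  have fk: "\<forall>r. fin_supp (?K r)" using fu by (simp add: fin_supp_kappa)
  note F = eval_op_foldr[OF fk fk[rule_format, of m], where xs="butlast [1..<m+1]" and a=a]
  have "eval_op a (w_poly p m u) = prod_list (map (\<lambda>r. eval_op a (?K r)) (butlast [1..<m+1] @ [m]))"
    using F unfolding w_poly_def by simp
  also have "\<dots> = prod_list (map (\<lambda>r. eval_op a (?K r)) [1..<m+1])" using butlast_upt[OF m] by simp
  finally show ?thesis using F fu unfolding w_poly_def by (simp add: eval_op_kappa)
qed

lemma eval_op_word_subst:
  assumes "\<forall>i. fin_supp (s i)"
  shows "fin_supp (word_subst s w) \<and> eval_op a (word_subst s w) = mon_op (\<lambda>i. eval_op a (s i)) w"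
  by (induction w) (simp_all add: word_subst_def assms fin_supp_mul fin_supp_one eval_op_mul eval_op_one mon_op_def)

lemma eval_op_lincomb:
  assumes fin: "finite W" and fh: "\<forall>w. fin_supp (h w)"
  shows "eval_op a (\<lambda>u. \<Sum>w\<in>W. c w * h w u) = (\<Sum>w\<in>W. scal (c w) * eval_op a (h w))"
proof -
  let ?S = "\<Union>w\<in>W. {u. h w u \<noteq> 0}"
  have finS: "finite ?S" using fin fh by (simp add: fin_supp_def)
  have sub: "{u. (\<Sum>w\<in>W. c w * h w u) \<noteq> 0} \<subseteq> ?S"
  proof
    fix u assume "u \<in> {u. (\<Sum>w\<in>W. c w * h w u) \<noteq> 0}"
    then obtain w where "w \<in> W" "c w * h w u \<noteq> 0"
      by (auto elim: sum.not_neutral_contains_not_neutral)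
    thus "u \<in> ?S" by auto
  qed
  have "eval_op a (\<lambda>u. \<Sum>w\<in>W. c w * h w u) = (\<Sum>u\<in>?S. scal (\<Sum>w\<in>W. c w * h w u) * mon_op a u)"
    by (rule eval_op_superset[OF finS sub])
  also have "\<dots> = (\<Sum>u\<in>?S. \<Sum>w\<in>W. scal (c w) * (scal (h w u) * mon_op a u))"
    by (simp add: scal_sum sum_distrib_right scal_mult[symmetric] mult.assoc)
  also have "\<dots> = (\<Sum>w\<in>W. scal (c w) * (\<Sum>u\<in>?S. scal (h w u) * mon_op a u))"
    by (simp add: sum.swap[of _ ?S] sum_distrib_left)
  also have "\<dots> = (\<Sum>w\<in>W. scal (c w) * eval_op a (h w))"
  proof (rule sum.cong[OF refl])
    fix w assume w: "w \<in> W"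
    have "eval_op a (h w) = (\<Sum>u\<in>?S. scal (h w u) * mon_op a u)"
      by (rule eval_op_superset[OF finS]) (use w in auto)
    thus "scal (c w) * (\<Sum>u\<in>?S. scal (h w u) * mon_op a u) = scal (c w) * eval_op a (h w)" by simp
  qed
  finally show ?thesis .
qed

lemma eval_op_nc_subst:
  assumes ff: "fin_supp f" and fsub: "\<forall>i. fin_supp (s i)"
  shows "fin_supp (nc_subst s f) \<and> eval_op a (nc_subst s f) = eval_op (\<lambda>i. eval_op a (s i)) f"
proof -
  let ?W = "{w. f w \<noteq> 0}"
  have finW: "finite ?W" using ff by (simp add: fin_supp_def)
  have fw: "\<forall>w. fin_supp (word_subst s w)" using eval_op_word_subst[OF fsub] by blast
  have fsn: "fin_supp (nc_subst s f)"
  proof -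
    have "{u. nc_subst s f u \<noteq> 0} \<subseteq> (\<Union>w\<in>?W. {u. word_subst s w u \<noteq> 0})"
    proof
      fix u assume "u \<in> {u. nc_subst s f u \<noteq> 0}"
      then obtain w where "w \<in> ?W" "f w * word_subst s w u \<noteq> 0"
        unfolding nc_subst_def by (auto elim: sum.not_neutral_contains_not_neutral)
      thus "u \<in> (\<Union>w\<in>?W. {u. word_subst s w u \<noteq> 0})" by auto
    qed
    moreover have "finite (\<Union>w\<in>?W. {u. word_subst s w u \<noteq> 0})"
      using finW fw by (simp add: fin_supp_def)
    ultimately show ?thesis unfolding fin_supp_def by (rule finite_subset)
  qed
  have "eval_op a (nc_subst s f) = (\<Sum>w\<in>?W. scal (f w) * eval_op a (word_subst s w))"
    unfolding nc_subst_def by (rule eval_op_lincomb[OF finW fw])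
  also have "\<dots> = (\<Sum>w\<in>?W. scal (f w) * mon_op (\<lambda>i. eval_op a (s i)) w)"
    using eval_op_word_subst[OF fsub] by simp
  also have "\<dots> = eval_op (\<lambda>i. eval_op a (s i)) f"
    by (simp only: eval_op_def[of "\<lambda>i. eval_op a (s i)" f])
  finally show ?thesis using fsn by simp
qed

lemma nc_mul_nil: "nc_mul f g [] = f [] * g []"
  by (simp add: nc_mul_def)

lemma ncP_zero: "nc_zero \<in> ncP" by (simp add: ncP_def nc_zero_def)
lemma ncP_fin_supp: "f \<in> ncP \<Longrightarrow> fin_supp f" by (simp add: ncP_def fin_supp_def)
lemma ncP_add: "f \<in> ncP \<Longrightarrow> g \<in> ncP \<Longrightarrow> nc_add f g \<in> ncP"
  using fin_supp_add[of f g] by (simp add: ncP_def fin_supp_def nc_add_def)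
lemma ncP_smult: "f \<in> ncP \<Longrightarrow> nc_smult c f \<in> ncP"
  using fin_supp_smult[of f c] by (simp add: ncP_def fin_supp_def nc_smult_def)

lemma ncP_subst:
  assumes f: "f \<in> ncP" and s: "\<forall>i. s i \<in> ncP"
  shows "nc_subst s f \<in> ncP"
proof -
  have fsub: "\<forall>i. fin_supp (s i)" using s ncP_fin_supp by blast
  have "fin_supp (nc_subst s f)" using eval_op_nc_subst[OF ncP_fin_supp[OF f] fsub] by blast
  moreover have "nc_subst s f [] = 0"
    unfolding nc_subst_def
  proof (rule sum.neutral, rule ballI)
    fix w assume "w \<in> {w. f w \<noteq> 0}"
    hence "w \<noteq> []" using f by (auto simp add: ncP_def)
    then obtain i w' where "w = i # w'" by (cases w) auto
    thus "f w * word_subst s w [] = 0"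
      using s by (simp add: word_subst_def nc_mul_nil ncP_def)
  qed
  ultimately show ?thesis by (simp add: ncP_def fin_supp_def)
qed

lemma kappa_nil: "u [] = 0 \<Longrightarrow> kappa p u v [] = 0"
  by (simp add: kappa_def nc_mul_nil nc_comm_def nc_add_def nc_smult_def)

lemma w_poly_nil:
  assumes "\<forall>i. u i [] = 0"
  shows "w_poly p m u [] = 0"
proof -
  have "foldr (\<lambda>r acc. nc_mul (kappa p (u (2*r - 1)) (u (2*r))) acc) xs
      (kappa p (u (2*m - 1)) (u (2*m))) [] = 0" for xs
    by (induction xs) (simp_all add: nc_mul_nil kappa_nil assms)
  then show ?thesis
    by (simp add: w_poly_def)
qed

lemma graph_el_sum: "(\<forall>x\<in>A. graph_el (g x)) \<Longrightarrow> graph_el (\<Sum>x\<in>A. g x)"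
  by (induction A rule: infinite_finite_induct) (simp_all add: graph_el_zero graph_el_add)

lemma graph_el_mon_op:
  assumes two: "(2::'k::field) \<noteq> 0" and ga: "\<forall>i. graph_el (a i :: 'k endo)"
  shows "graph_el (mon_op a w)"
  by (induction w) (simp_all add: mon_op_def graph_el_one graph_el_mult[OF two] ga)

lemma graph_el_eval_op:
  assumes two: "(2::'k::field) \<noteq> 0" and ga: "\<forall>i. graph_el (a i :: 'k endo)"
  shows "graph_el (eval_op a f)"
  unfolding eval_op_def
  by (rule graph_el_sum) (simp add: graph_el_scal_mult[OF two] graph_el_mon_op[OF two ga])

section \<open>T-spaces\<close>

lemma is_TspaceI:
  assumes "V \<subseteq> ncP" "nc_zero \<in> V" "\<And>f g. f \<in> V \<Longrightarrow> g \<in> V \<Longrightarrow> nc_add f g \<in> V"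
    "\<And>c f. f \<in> V \<Longrightarrow> nc_smult c f \<in> V"
    "\<And>s f. \<forall>i. s i \<in> ncP \<Longrightarrow> f \<in> V \<Longrightarrow> nc_subst s f \<in> V"
  shows "is_Tspace V"
  unfolding is_Tspace_def using assms by blast

lemma Tclosure_least: "is_Tspace V \<Longrightarrow> H \<subseteq> V \<Longrightarrow> Tclosure H \<subseteq> V"
  unfolding Tclosure_def by blast

lemma Tclosure_superset: "H \<subseteq> Tclosure H"
  unfolding Tclosure_def by blast

lemma finite_subset_Union_mono:
  fixes V :: "nat \<Rightarrow> 'a set"
  assumes "mono V" "finite H" "H \<subseteq> (\<Union>m. V m)"
  obtains m where "H \<subseteq> V m"
proof (rule finite_subset_Union_chain[of H "range V" UNIV])
  have "V m \<subseteq> V m' \<or> V m' \<subseteq> V m" for m m'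
    using nat_le_linear[of m m'] monoD[OF assms(1)] by blast
  then show "subset.chain UNIV (range V)"
    by (auto simp add: subset_chain_def)
qed (use assms(2,3) in auto)

lemma is_TspaceD:
  assumes "is_Tspace V"
  shows "V \<subseteq> ncP" and "nc_zero \<in> V"
    and "f \<in> V \<Longrightarrow> g \<in> V \<Longrightarrow> nc_add f g \<in> V"
    and "f \<in> V \<Longrightarrow> nc_smult c f \<in> V"
    and "\<forall>i. s i \<in> ncP \<Longrightarrow> f \<in> V \<Longrightarrow> nc_subst s f \<in> V"
  using assms by (simp_all add: is_Tspace_def)

lemma is_Tspace_Union_mono:
  fixes V :: "nat \<Rightarrow> 'k::field ncpoly set"
  assumes T: "\<And>m. is_Tspace (V m)" and "mono V"
  shows "is_Tspace (\<Union>m. V m)"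
proof (rule is_TspaceI)
  show "(\<Union>m. V m) \<subseteq> ncP"
    using is_TspaceD(1)[OF T] by blast
  show "nc_zero \<in> (\<Union>m. V m)"
    using is_TspaceD(2)[OF T] by blast
  show "nc_smult c f \<in> (\<Union>m. V m)" if f: "f \<in> (\<Union>m. V m)" for c f
  proof -
    obtain m where "f \<in> V m"
      using f by blast
    then show ?thesis
      using is_TspaceD(4)[OF T, of f m c] by blast
  qed
  show "nc_subst s f \<in> (\<Union>m. V m)" if s: "\<forall>i. s i \<in> ncP" and f: "f \<in> (\<Union>m. V m)" for s f
  proof -
    obtain m where "f \<in> V m"
      using f by blast
    then show ?thesis
      using is_TspaceD(5)[OF T s, of f m] by blast
  qed
  show "nc_add f g \<in> (\<Union>m. V m)" if fg: "f \<in> (\<Union>m. V m)" "g \<in> (\<Union>m. V m)" for f g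
  proof -
    have "finite {f, g}" "{f, g} \<subseteq> (\<Union>m. V m)"
      using fg by auto
    then obtain m where "{f, g} \<subseteq> V m"
      by (rule finite_subset_Union_mono[OF \<open>mono V\<close>])
    then have "nc_add f g \<in> V m"
      by (simp add: is_TspaceD(3)[OF T])
    then show ?thesis
      by blast
  qed
qed

lemma not_finitely_based_Tclosure:
  fixes V :: "nat \<Rightarrow> 'k::field ncpoly set"
  assumes T: "\<And>m. is_Tspace (V m)" and mono: "mono V"
    and H: "H \<subseteq> (\<Union>m. V m)" and H_not: "\<And>m. \<not> H \<subseteq> V m"
  shows "\<not> finitely_based (Tclosure H)"
proof
  assume "finitely_based (Tclosure H)"
  then obtain G where G: "finite G" "Tclosure H = Tclosure G"
    unfolding finitely_based_def by blast
  have "G \<subseteq> Tclosure G"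
    by (rule Tclosure_superset)
  also have "\<dots> = Tclosure H"
    by (rule G(2)[symmetric])
  also have "\<dots> \<subseteq> (\<Union>m. V m)"
    by (rule Tclosure_least[OF is_Tspace_Union_mono[OF T mono] H])
  finally obtain m where "G \<subseteq> V m"
    by (rule finite_subset_Union_mono[OF mono G(1)])
  have "H \<subseteq> Tclosure H"
    by (rule Tclosure_superset)
  also have "\<dots> = Tclosure G"
    by (rule G(2))
  also have "\<dots> \<subseteq> V m"
    by (rule Tclosure_least[OF T \<open>G \<subseteq> V m\<close>])
  finally show False
    using H_not by blast
qed

section \<open>The chain of T-spaces\<close>

definition annihilated :: "nat \<Rightarrow> nat \<Rightarrow> 'k::field ncpoly set" where
  "annihilated p m = {f \<in> ncP. \<forall>a n. (\<forall>i. graph_el (a i)) \<longrightarrow> 2 * m < n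
      \<longrightarrow> top_coeff p n (eval_op a f) = (0::'k)}"

lemma annihilatedI:
  assumes "f \<in> ncP"
    and "\<And>a n. \<forall>i. graph_el (a i) \<Longrightarrow> 2 * m < n \<Longrightarrow> top_coeff p n (eval_op a f) = (0::'k::field)"
  shows "f \<in> annihilated p m"
  using assms unfolding annihilated_def by blast

lemma annihilatedD:
  assumes "f \<in> annihilated p m"
  shows "f \<in> ncP"
    and "\<forall>i. graph_el (a i) \<Longrightarrow> 2 * m < n \<Longrightarrow> top_coeff p n (eval_op a f) = (0::'k::field)"
  using assms unfolding annihilated_def by blast+

lemma annihilated_mono: "mono (annihilated p :: nat \<Rightarrow> 'k::field ncpoly set)"
proof (rule monoI, rule subsetI)
  fix m m' :: nat and f :: "'k ncpoly"
  assume "m \<le> m'" and f: "f \<in> annihilated p m"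
  show "f \<in> annihilated p m'"
  proof (rule annihilatedI)
    show "f \<in> ncP"
      by (rule annihilatedD(1)[OF f])
    fix a :: "nat \<Rightarrow> 'k endo" and n :: nat
    assume "\<forall>i. graph_el (a i)" "2 * m' < n"
    then show "top_coeff p n (eval_op a f) = 0"
      using annihilatedD(2)[OF f] \<open>m \<le> m'\<close> by simp
  qed
qed

lemma annihilated_add:
  assumes f: "f \<in> (annihilated p m :: 'k::field ncpoly set)" and g: "g \<in> annihilated p m"
  shows "nc_add f g \<in> annihilated p m"
proof (rule annihilatedI)
  note fP = annihilatedD(1)[OF f] and gP = annihilatedD(1)[OF g]
  show "nc_add f g \<in> ncP"
    by (rule ncP_add[OF fP gP])
  fix a :: "nat \<Rightarrow> 'k endo" and n :: nat
  assume "\<forall>i. graph_el (a i)" "2 * m < n"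
  then show "top_coeff p n (eval_op a (nc_add f g)) = 0"
    using annihilatedD(2)[OF f] annihilatedD(2)[OF g]
    by (simp add: eval_op_add ncP_fin_supp fP gP top_coeff_add)
qed

lemma annihilated_smult:
  assumes f: "f \<in> (annihilated p m :: 'k::field ncpoly set)"
  shows "nc_smult c f \<in> annihilated p m"
proof (rule annihilatedI)
  note fP = annihilatedD(1)[OF f]
  show "nc_smult c f \<in> ncP"
    by (rule ncP_smult[OF fP])
  fix a :: "nat \<Rightarrow> 'k endo" and n :: nat
  assume "\<forall>i. graph_el (a i)" "2 * m < n"
  then show "top_coeff p n (eval_op a (nc_smult c f)) = 0"
    using annihilatedD(2)[OF f] by (simp add: eval_op_smult ncP_fin_supp fP top_coeff_scal_mult)
qed

lemma annihilated_nc_subst: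
  assumes two: "(2::'k::field) \<noteq> 0"
    and s: "\<forall>i. s i \<in> ncP" and f: "f \<in> (annihilated p m :: 'k ncpoly set)"
  shows "nc_subst s f \<in> annihilated p m"
proof (rule annihilatedI)
  note fP = annihilatedD(1)[OF f]
  show "nc_subst s f \<in> ncP"
    by (rule ncP_subst[OF fP s])
  fix a :: "nat \<Rightarrow> 'k endo" and n :: nat
  assume a: "\<forall>i. graph_el (a i)" and n: "2 * m < n"
  have "\<forall>i. fin_supp (s i)"
    using s ncP_fin_supp by blast
  then have "eval_op a (nc_subst s f) = eval_op (\<lambda>i. eval_op a (s i)) f"
    using eval_op_nc_subst[OF ncP_fin_supp[OF fP]] by blast
  moreover have "\<forall>i. graph_el (eval_op a (s i))"
    using graph_el_eval_op[OF two a] by blast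
  ultimately show "top_coeff p n (eval_op a (nc_subst s f)) = 0"
    using annihilatedD(2)[OF f _ n] by simp
qed

lemma is_Tspace_annihilated:
  assumes two: "(2::'k::field) \<noteq> 0"
  shows "is_Tspace (annihilated p m :: 'k ncpoly set)"
proof (rule is_TspaceI)
  show "annihilated p m \<subseteq> ncP"
    using annihilatedD(1) by blast
  show "nc_zero \<in> annihilated p m"
    by (rule annihilatedI) (simp_all add: ncP_zero eval_op_zero top_coeff_zero)
qed (simp_all add: annihilated_add annihilated_smult annihilated_nc_subst[OF two])

lemma w_poly_in_annihilated:
  assumes two: "(2::'k::field) \<noteq> 0" and p: "2 \<le> p" and pz: "of_nat p = (0::'k)"
    and j: "1 \<le> j" "j \<le> m"
  shows "w_poly p j (\<lambda>i. nc_var (f i)) \<in> (annihilated p m :: 'k ncpoly set)"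
proof -
  let ?w = "w_poly p j (\<lambda>i. nc_var (f i)) :: 'k ncpoly"
  have fu: "\<forall>i. fin_supp (nc_var (f i) :: 'k ncpoly)"
    by (simp add: fin_supp_var)
  have W: "fin_supp ?w \<and> eval_op a ?w
      = prod_list (map (\<lambda>r. kappa_op p (a (f (2*r - 1))) (a (f (2*r)))) [1..<j+1])" for a
    using eval_op_w_poly[OF j(1) fu, of p a] by (simp add: eval_op_var)
  have "?w \<in> ncP"
    using W w_poly_nil[of "\<lambda>i. nc_var (f i)" p j] by (simp add: ncP_def fin_supp_def nc_var_def)
  moreover have "top_coeff p n (eval_op a ?w) = 0" if "\<forall>i. graph_el (a i)" "2 * m < n" for a n
    unfolding W[THEN conjunct2]
    by (rule top_coeff_prod_kappa_op_eq_0[OF two p pz]) (use that j in auto)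
  ultimately show ?thesis
    by (rule annihilatedI)
qed

lemma w_poly_not_in_annihilated:
  assumes two: "(2::'k::field) \<noteq> 0" and p: "2 \<le> p"
  shows "w_poly p (m+1) nc_var \<notin> (annihilated p m :: 'k ncpoly set)"
proof
  let ?a = "\<lambda>i. T i + E i :: 'k endo"
  have fu: "\<forall>i. fin_supp (nc_var i :: 'k ncpoly)"
    by (simp add: fin_supp_var)
  have "eval_op ?a (w_poly p (m+1) nc_var)
      = prod_list (map (\<lambda>r. kappa_op p (?a (2*r - 1)) (?a (2*r))) [1..<(m+1)+1])"
    using eval_op_w_poly[OF le_add2[of 1 m] fu, of p ?a, unfolded eval_op_var] by (rule conjunct2)
  then have "top_coeff p (2*m+2) (eval_op ?a (w_poly p (m+1) nc_var)) = 2 ^ (m+1)"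
    using top_coeff_prod_kappa_op_T_E[OF two p, of "m+1"] by simp
  moreover assume "w_poly p (m+1) nc_var \<in> (annihilated p m :: 'k ncpoly set)"
  then have "top_coeff p (2*m+2) (eval_op ?a (w_poly p (m+1) nc_var)) = 0"
    by (rule annihilatedD(2)) (simp_all add: graph_el_T_E)
  ultimately show False
    using two by simp
qed

theorem corollary2p5:
  fixes p :: nat
  assumes "prime p" and "p > 2" and "CHAR('k::field) = p"
  shows "\<not> finitely_based (Tclosure (W_set p :: 'k ncpoly set))"
proof (rule not_finitely_based_Tclosure[OF _ annihilated_mono])
  have pz: "of_nat p = (0::'k)"
    using assms(3) by (metis of_nat_CHAR)
  have two: "(2::'k) \<noteq> 0"
    using assms(2,3) of_nat_eq_0_iff_char_dvd[of 2, where 'a='k] by (auto dest: nat_dvd_not_less)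
  have p: "2 \<le> p"
    using assms(2) by simp
  show "is_Tspace (annihilated p m :: 'k ncpoly set)" for m
    by (rule is_Tspace_annihilated[OF two])
  show "W_set p \<subseteq> (\<Union>m. annihilated p m :: 'k ncpoly set)"
    unfolding W_set_def using w_poly_in_annihilated[OF two p pz] by blast
  show "\<not> W_set p \<subseteq> (annihilated p m :: 'k ncpoly set)" for m
  proof
    assume "W_set p \<subseteq> (annihilated p m :: 'k ncpoly set)"
    moreover have "w_poly p (m+1) nc_var \<in> (W_set p :: 'k ncpoly set)"
      unfolding W_set_def by (rule CollectI, rule exI[of _ "m+1"], rule exI[of _ id])
        (simp add: strict_mono_on_def id_def)
    ultimately show False
      using w_poly_not_in_annihilated[OF two p] by blast
  qed
qed

end
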